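(* Under the standing setting and assumptions (A0)–(A3) below, let $\beta\in(0,\tfrac12]$. Then for every $n\in\mathbb N$, almost surely, \[ \mathbb E_n[d^2(x_{n+1},x^* )]\leq d^2(x_n,x^* )-\lambda_n^2(1-2\beta)\,\mathbb E_n\big[\|A_{\lambda_n}(\xi_{n+1},x_n)\|^2_{x_{n+1}}\big]+\lambda_n^2\frac{\int\|\phi^*\|^2_{x^*}\,d\mu}{2\beta}. \]
   Context: Geometry. A Hadamard space is a complete CAT(0) space: a geodesic metric space $(X,d)$ with $d^2(\gamma(tl),x)\leq (1-t)d^2(\gamma(0),x)+td^2(\gamma(l),x)-t(1-t)d^2(\gamma(0),\gamma(l))$ for all $x\in X$, geodesics $\gamma:[0,l]\to X$, $t\in[0,1]$; it is uniquely geodesic, $\gamma_{x,y}$ denoting the geodesic from $x$ to $y$. For $x\in X$, $\angle_x(\gamma,\eta):=\lim_{s,t\to0^+}\bar\angle_x(\gamma(s),\eta(t))$ is the Aleksandrov angle between nonconstant geodesics issuing from $x$; $\Sigma_xX$ is the completion of such geodesics modulo $\angle_x=0$; the tangent space $T_xX$ is the Euclidean cone over $\Sigma_xX$ (elements $t\gamma$, $t\ge0$, all $0\gamma$ identified to $0_x$, $\lambda(t\gamma):=(\lambda t)\gamma$), with metric $d_x(t\gamma,s\eta)=\sqrt{t^2+s^2-2ts\cos\angle_x(\gamma,\eta)}$, $\|t\gamma\|_x=t$, $g_x(t\gamma,s\eta)=ts\cos\angle_x(\gamma,\eta)$; $TX=\bigcup_xT_xX$. $\log_x:X\to T_xX$,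 $\log_xa:=d(x,a)\gamma_{x,a}$ ($a\ne x$), $\log_xx:=0_x$. Vector fields. $A:X\to2^{TX}$ with $A(x)\subseteq T_xX$ is monotone if $g_x(u,\log_xy)\le-g_y(v,\log_yx)$ for all $u\in A(x),v\in A(y)$, and strongly monotone with modulus $\alpha>0$ if $g_x(u,\log_xy)\le-g_y(v,\log_yx)-\alpha d^2(x,y)$. For monotone $A$ and $\lambda>0$, the resolvent $J_\lambda x$ is the unique $z$ with $\tfrac1\lambda\log_zx\in A(z)$ (if it exists); $A$ satisfies the surjectivity condition if such $z$ exists for all $\lambda>0,x\in X$. The Yosida approximate is $A_\lambda x:=\tfrac1\lambda\log_{J_\lambda x}x\in T_{J_\lambda x}X$. Integration. For a probability space and a separable Hadamard space $Y$, $L^p$ consists of measurable $Y$-valued maps with finite $p$-th moment of distance; the integral/expectation of an $L^1$ map is the barycenter of its distribution (minimizer of $z\mapsto\int(d^2(z,w)-d^2(w,y))$), and conditional expectation $\mathbb E[x\mid\mathcal G]$ of $x\in L^2$ is the $\mathcal G$-measurable $L^2$ map minimizing $\int d^2(z,x)$ (extended continuously to $L^1$); this applies to $Y=X$ and $Y=T_xX$. Standing setting. $(E,\mathcal E,\mu)$ and $(\Omega,\mathcal F,\mathbb P)$ are probability spaces; $X$ is a separable Hadamard space with every $T_xX$ separable. $A:E\times X\to2^{TX}$, $A(s,x)\subseteq T_xX$, is a random monotone vector field: each $A(s,\cdot)$ is monotone and $s\mapsto J_\lambda(s,x)$ is $\mathcal E/\mathcal B(X)$-measurable for every $x,\lambda$,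 where $J_\lambda(s,\cdot)$, $A_\lambda(s,\cdot)$ denote resolvent and Yosida approximate of $A(s,\cdot)$; moreover each $A(s,\cdot)$ satisfies the surjectivity condition. For $x\in X$, $S^p_A(x)$ is the set of measurable $\phi:E\to T_xX$ with $\phi(s)\in A(s,x)$ for all $s$ and $\phi\in L^p(E,T_xX,\mu)$; the mean field is $\underline A(x):=\{\int\phi\,d\mu\mid\phi\in S^1_A(x)\}$; $\mathcal Z_A(2):=\{x\mid\exists\phi\in S^2_A(x),\ \int\phi\,d\mu=0_x\}$. Given $x_0\in X$, $(\lambda_n)\subseteq(0,\infty)$ and random variables $\xi_n:\Omega\to E$, the iteration is $x_{n+1}:=J_{\lambda_n}(\xi_{n+1},x_n)$; $\mathcal F_n:=\sigma(\xi_1,\dots,\xi_n)$ ($\mathcal F_0$ trivial), $\mathbb E_n[\cdot]:=\mathbb E[\cdot\mid\mathcal F_n]$. Note $\|A_{\lambda_n}(\xi_{n+1},x_n)\|_{x_{n+1}}=d(x_n,x_{n+1})/\lambda_n$. Assumptions. (A0) $\sum_n\lambda_n^2<\infty$, $\sum_n\lambda_n=\infty$, and $(\xi_{n+1})$ is i.i.d. with distribution $\mu$. (A1) each $A(s,\cdot)$ is strongly monotone with modulus $\alpha(s)\in(0,1]$, where $\alpha:E\to(0,1]$ is measurable with $\underline\alpha:=\int\alpha\,d\mu>0$. (A2) $\underline A$ has a zero $x^*$ (i.e. $0_{x^*}\in\underline A(x^* )$) with $x^*\in\mathcal Z_A(2)$; a fixed $\phi^*\in S^2_A(x^* )$ with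 $\int\phi^*\,d\mu=0_{x^*}$ is chosen. (A3) $\mathbb E_n[g_{x^*}(\phi^*(\xi_{n+1}),\log_{x^*}x_n)]=0$ a.s. for every $n\in\mathbb N$. *)

theory Defs
  imports "HOL-Probability.Probability"
begin

definition geodesic_seg :: "(real \<Rightarrow> 'a::metric_space) \<Rightarrow> real \<Rightarrow> bool" where
  "geodesic_seg \<gamma> l \<longleftrightarrow> l \<ge> 0 \<and> (\<forall>s\<in>{0..l}. \<forall>t\<in>{0..l}. dist (\<gamma> s) (\<gamma> t) = \<bar>s - t\<bar>)"

definition geodesic_space :: "'a::metric_space itself \<Rightarrow> bool" where
  "geodesic_space _ \<longleftrightarrow> (\<forall>x y::'a. \<exists>\<gamma>. geodesic_seg \<gamma> (dist x y) \<and> \<gamma> 0 = x \<and> \<gamma> (dist x y) = y)"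

definition CAT0_ineq :: "'a::metric_space itself \<Rightarrow> bool" where
  "CAT0_ineq _ \<longleftrightarrow> (\<forall>(\<gamma>::real \<Rightarrow> 'a) l x t. geodesic_seg \<gamma> l \<and> t \<in> {0..1} \<longrightarrow>
      (dist (\<gamma> (t * l)) x)\<^sup>2 \<le> (1 - t) * (dist (\<gamma> 0) x)\<^sup>2 + t * (dist (\<gamma> l) x)\<^sup>2
                                 - t * (1 - t) * (dist (\<gamma> 0) (\<gamma> l))\<^sup>2)"

definition hadamard :: "'a::complete_space itself \<Rightarrow> bool" where
  "hadamard T \<longleftrightarrow> geodesic_space T \<and> CAT0_ineq T"

text \<open>The geodesic from x to a (unique on [0, d(x,a)] in a Hadamard space).\<close>
definition geod :: "'a::metric_space \<Rightarrow> 'a \<Rightarrow> real \<Rightarrow> 'a" where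
  "geod x a = (SOME \<gamma>. geodesic_seg \<gamma> (dist x a) \<and> \<gamma> 0 = x \<and> \<gamma> (dist x a) = a)"

definition cangle :: "'a::metric_space \<Rightarrow> 'a \<Rightarrow> 'a \<Rightarrow> real" where
  "cangle x a b = arccos (((dist x a)\<^sup>2 + (dist x b)\<^sup>2 - (dist a b)\<^sup>2) / (2 * dist x a * dist x b))"

text \<open>Aleksandrov angle at x between the geodesics from x to a and from x to b
 (every nonconstant geodesic issuing from x is an initial piece of such a geodesic).\<close>
definition alex_angle :: "'a::metric_space \<Rightarrow> 'a \<Rightarrow> 'a \<Rightarrow> real" where
  "alex_angle x a b = Lim (at_right 0 \<times>\<^sub>F at_right 0)
      (\<lambda>(s, t). cangle x (geod x a s) (geod x b t))"

text \<open>Points of the completion of the space of directions \<Sigma>_x X are represented by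
 Cauchy sequences (w.r.t. the angle) of points a \<noteq> x (standing for the geodesics from x to a).
 A tangent vector t\<gamma> is represented by a pair (t, \<sigma>); representatives with distance 0
 represent the same tangent vector.\<close>

type_synonym 'a tvec = "real \<times> (nat \<Rightarrow> 'a)"

definition dir_cauchy :: "'a::metric_space \<Rightarrow> (nat \<Rightarrow> 'a) \<Rightarrow> bool" where
  "dir_cauchy x \<sigma> \<longleftrightarrow> (\<forall>n. \<sigma> n \<noteq> x) \<and>
     (\<forall>e>0. \<exists>N. \<forall>m\<ge>N. \<forall>n\<ge>N. alex_angle x (\<sigma> m) (\<sigma> n) < e)"

definition dir_angle :: "'a::metric_space \<Rightarrow> (nat \<Rightarrow> 'a) \<Rightarrow> (nat \<Rightarrow> 'a) \<Rightarrow> real" where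
  "dir_angle x \<sigma> \<tau> = lim (\<lambda>n. alex_angle x (\<sigma> n) (\<tau> n))"

definition tangent :: "'a::metric_space \<Rightarrow> 'a tvec set" where
  "tangent x = {(t, \<sigma>). t \<ge> 0 \<and> (t = 0 \<or> dir_cauchy x \<sigma>)}"

definition tzero :: "'a::metric_space \<Rightarrow> 'a tvec" where
  "tzero x = (0, \<lambda>_. x)"

definition tscale :: "real \<Rightarrow> 'a tvec \<Rightarrow> 'a tvec" where
  "tscale c u = (c * fst u, snd u)"

definition tnorm :: "'a tvec \<Rightarrow> real" where
  "tnorm u = fst u"

definition tinner :: "'a::metric_space \<Rightarrow> 'a tvec \<Rightarrow> 'a tvec \<Rightarrow> real" where
  "tinner x u v = fst u * fst v * cos (dir_angle x (snd u) (snd v))"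

definition tdist :: "'a::metric_space \<Rightarrow> 'a tvec \<Rightarrow> 'a tvec \<Rightarrow> real" where
  "tdist x u v = sqrt ((fst u)\<^sup>2 + (fst v)\<^sup>2 - 2 * tinner x u v)"

text \<open>Membership of a tangent vector (modulo the identification of representatives).\<close>
definition tmem :: "'a::metric_space \<Rightarrow> 'a tvec \<Rightarrow> 'a tvec set \<Rightarrow> bool" where
  "tmem x u S \<longleftrightarrow> (\<exists>v\<in>S. tdist x u v = 0)"

text \<open>log_x a = d(x,a) \<gamma>_{x,a}; for a = x this is 0_x (norm 0).\<close>
definition logm :: "'a::metric_space \<Rightarrow> 'a \<Rightarrow> 'a tvec" where
  "logm x a = (dist x a, \<lambda>_. a)"

definition tangent_separable :: "'a::metric_space \<Rightarrow> bool" where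
  "tangent_separable x \<longleftrightarrow> (\<exists>D. countable D \<and> D \<subseteq> tangent x \<and>
      (\<forall>u\<in>tangent x. \<forall>e>0. \<exists>v\<in>D. tdist x u v < e))"

definition strongly_monotone :: "('a::metric_space \<Rightarrow> 'a tvec set) \<Rightarrow> real \<Rightarrow> bool" where
  "strongly_monotone A \<alpha> \<longleftrightarrow> (\<forall>x y u v. u \<in> A x \<and> v \<in> A y \<longrightarrow>
      tinner x u (logm x y) \<le> - tinner y v (logm y x) - \<alpha> * (dist x y)\<^sup>2)"

definition monotone_vf :: "('a::metric_space \<Rightarrow> 'a tvec set) \<Rightarrow> bool" where
  "monotone_vf A \<longleftrightarrow> (\<forall>x y u v. u \<in> A x \<and> v \<in> A y \<longrightarrow>
      tinner x u (logm x y) \<le> - tinner y v (logm y x))"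

definition is_resolvent_pt :: "('a::metric_space \<Rightarrow> 'a tvec set) \<Rightarrow> real \<Rightarrow> 'a \<Rightarrow> 'a \<Rightarrow> bool" where
  "is_resolvent_pt A lam x z \<longleftrightarrow> tmem z (tscale (1 / lam) (logm z x)) (A z)"

definition resolvent :: "('a::metric_space \<Rightarrow> 'a tvec set) \<Rightarrow> real \<Rightarrow> 'a \<Rightarrow> 'a" where
  "resolvent A lam x = (THE z. is_resolvent_pt A lam x z)"

definition surjectivity_cond :: "('a::metric_space \<Rightarrow> 'a tvec set) \<Rightarrow> bool" where
  "surjectivity_cond A \<longleftrightarrow> (\<forall>lam>0. \<forall>x. \<exists>z. is_resolvent_pt A lam x z)"

definition yosida :: "('a::metric_space \<Rightarrow> 'a tvec set) \<Rightarrow> real \<Rightarrow> 'a \<Rightarrow> 'a tvec" where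
  "yosida A lam x = tscale (1 / lam) (logm (resolvent A lam x) x)"

text \<open>Borel measurability of a map into the separable metric space T_xX
 (equivalently: all distance functions to points of T_xX are measurable).\<close>
definition tmeasurable :: "'e measure \<Rightarrow> 'a::metric_space \<Rightarrow> ('e \<Rightarrow> 'a tvec) \<Rightarrow> bool" where
  "tmeasurable M x \<phi> \<longleftrightarrow> (\<forall>s\<in>space M. \<phi> s \<in> tangent x) \<and>
     (\<forall>v\<in>tangent x. (\<lambda>s. tdist x v (\<phi> s)) \<in> borel_measurable M)"

definition tbarycenter :: "'e measure \<Rightarrow> 'a::metric_space \<Rightarrow> ('e \<Rightarrow> 'a tvec) \<Rightarrow> 'a tvec \<Rightarrow> bool" where
  "tbarycenter M x \<phi> b \<longleftrightarrow> b \<in> tangent x \<and>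
     (\<forall>z\<in>tangent x. (\<integral>s. (tdist x b (\<phi> s))\<^sup>2 - (tdist x (\<phi> s) (tzero x))\<^sup>2 \<partial>M)
                   \<le> (\<integral>s. (tdist x z (\<phi> s))\<^sup>2 - (tdist x (\<phi> s) (tzero x))\<^sup>2 \<partial>M))"

definition selections :: "nat \<Rightarrow> 'e measure \<Rightarrow> ('e \<Rightarrow> 'a::metric_space \<Rightarrow> 'a tvec set) \<Rightarrow> 'a \<Rightarrow> ('e \<Rightarrow> 'a tvec) set" where
  "selections p M A x = {\<phi>. tmeasurable M x \<phi> \<and> (\<forall>s\<in>space M. tmem x (\<phi> s) (A s x)) \<and>
                            integrable M (\<lambda>s. (tnorm (\<phi> s)) ^ p)}"

definition mean_field_zero :: "'e measure \<Rightarrow> ('e \<Rightarrow> 'a::metric_space \<Rightarrow> 'a tvec set) \<Rightarrow> 'a \<Rightarrow> bool" where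
  "mean_field_zero M A x \<longleftrightarrow> (\<exists>\<phi>\<in>selections 1 M A x. tbarycenter M x \<phi> (tzero x))"

primrec spp_iter :: "('e \<Rightarrow> 'a::metric_space \<Rightarrow> 'a tvec set) \<Rightarrow> 'a \<Rightarrow> (nat \<Rightarrow> real)
    \<Rightarrow> (nat \<Rightarrow> 'w \<Rightarrow> 'e) \<Rightarrow> nat \<Rightarrow> 'w \<Rightarrow> 'a" where
  "spp_iter A x0 lam \<xi> 0 = (\<lambda>_. x0)"
| "spp_iter A x0 lam \<xi> (Suc n) = (\<lambda>\<omega>. resolvent (A (\<xi> (Suc n) \<omega>)) (lam n) (spp_iter A x0 lam \<xi> n \<omega>))"

definition filtr :: "'w measure \<Rightarrow> 'e measure \<Rightarrow> (nat \<Rightarrow> 'w \<Rightarrow> 'e) \<Rightarrow> nat \<Rightarrow> 'w measure" where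
  "filtr P M \<xi> n = sigma (space P)
     {\<xi> i -` B \<inter> space P | i B. i \<in> {1..n} \<and> B \<in> sets M}"

end

theory Submission
  imports Defs
begin

text \<open>
  For one resolvent step z = J_\<lambda> x of a monotone field B and \<phi> \<in> B(x*), monotonicity between
  z and x* together with the CAT(0) comparison 2 g_z(log_z x, log_z x*) \<ge> d(z,x)^2 + d(z,x*)^2 - d(x,x*)^2
  gives d(z,x*)^2 + d(z,x)^2 \<le> d(x,x*)^2 - 2\<lambda> g_x*(\<phi>, log_x* z). Since g_x*(\<phi>, -) is
  \<parallel>\<phi>\<parallel>-Lipschitz and log_x* is nonexpansive, replacing z by x in the last term costs
  2\<lambda>\<parallel>\<phi>\<parallel> d(z,x) \<le> 2\<beta> d(z,x)^2 + \<lambda>^2\<parallel>\<phi>\<parallel>^2/(2\<beta>), and d(z,x) = \<lambda>\<parallel>A_\<lambda> x\<parallel>.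
  Taking B = A(\<xi>_{n+1}, -), \<phi> = \<phi>*(\<xi>_{n+1}) and conditioning on F_n, the inner-product term
  vanishes by (A3), and \<parallel>\<phi>*(\<xi>_{n+1})\<parallel>^2 averages to \<integral>\<parallel>\<phi>*\<parallel>^2 because \<xi>_{n+1} is independent
  of F_n with law \<mu>.

  The tangent-cone inner product is built from limits of Aleksandrov angles, so these estimates
  rest on the fact that an Aleksandrov angle is the infimum of the comparison angles along the two
  geodesics, which makes angles a pseudometric on directions.
\<close>

section \<open>Geodesics and comparison angles\<close>

lemma geod_geodesic:
  fixes x a :: "'a::complete_space"
  assumes H: "hadamard TYPE('a)"
  shows "geodesic_seg (geod x a) (dist x a) \<and> geod x a 0 = x \<and> geod x a (dist x a) = a"
proof -
  from H have "geodesic_space TYPE('a)" unfolding hadamard_def by simp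
  then have "\<exists>\<gamma>. geodesic_seg \<gamma> (dist x a) \<and> \<gamma> 0 = x \<and> \<gamma> (dist x a) = a"
    unfolding geodesic_space_def by blast
  then show ?thesis unfolding geod_def by (rule someI_ex)
qed

lemma dist_geod_geod:
  fixes x a :: "'a::complete_space"
  assumes H: "hadamard TYPE('a)" and "0 \<le> s" "s \<le> dist x a" "0 \<le> t" "t \<le> dist x a"
  shows "dist (geod x a s) (geod x a t) = \<bar>s - t\<bar>"
  using geod_geodesic[OF H, of x a] assms unfolding geodesic_seg_def by auto

lemma dist_geod:
  fixes x a :: "'a::complete_space"
  assumes H: "hadamard TYPE('a)" and "0 \<le> s" "s \<le> dist x a"
  shows "dist x (geod x a s) = s"
proof -
  have "dist (geod x a 0) (geod x a s) = \<bar>0 - s\<bar>"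
    using dist_geod_geod[OF H, of 0 x a s] assms by auto
  then show ?thesis using geod_geodesic[OF H, of x a] assms by auto
qed

lemma dist_geod_pos:
  fixes x a :: "'a::complete_space"
  assumes H: "hadamard TYPE('a)" and "0 < s" "s \<le> dist x a"
  shows "dist x (geod x a s) > 0"
  using dist_geod[OF H, of s x a] assms by simp

lemma geod_CAT0_ineq:
  fixes x a p :: "'a::complete_space"
  assumes H: "hadamard TYPE('a)" and s: "0 \<le> s" "s \<le> dist x a" and l: "0 \<le> l" "l \<le> 1"
  shows "(dist (geod x a (l * s)) p)\<^sup>2 \<le> (1 - l) * (dist x p)\<^sup>2 + l * (dist (geod x a s) p)\<^sup>2
                                 - l * (1 - l) * s\<^sup>2"
proof -
  let ?g = "geod x a"
  have "geodesic_seg ?g s"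
    using geod_geodesic[OF H, of x a] s unfolding geodesic_seg_def by auto
  moreover have "CAT0_ineq TYPE('a)" using H unfolding hadamard_def by simp
  ultimately have "(dist (?g (l * s)) p)\<^sup>2 \<le> (1 - l) * (dist (?g 0) p)\<^sup>2 + l * (dist (?g s) p)\<^sup>2
                                 - l * (1 - l) * (dist (?g 0) (?g s))\<^sup>2"
    using l unfolding CAT0_ineq_def by simp
  moreover have "?g 0 = x" using geod_geodesic[OF H, of x a] by simp
  moreover have "dist (?g 0) (?g s) = s" using dist_geod_geod[OF H, of 0 x a s] s by simp
  ultimately show ?thesis by simp
qed

lemma cangle_commute: "cangle x a b = cangle x b a"
  unfolding cangle_def by (simp add: dist_commute add.commute mult.commute mult.left_commute)

lemma cangle_cos_arg_bounded:
  fixes x p q :: "'a::metric_space"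
  assumes "dist x p > 0" "dist x q > 0"
  shows "((dist x p)\<^sup>2 + (dist x q)\<^sup>2 - (dist p q)\<^sup>2) / (2 * dist x p * dist x q) \<in> {-1..1}"
proof -
  define s where "s = dist x p"
  define t where "t = dist x q"
  define d where "d = dist p q"
  have d1: "d \<le> s + t" unfolding s_def t_def d_def using dist_triangle3[of p q x] by (simp add: dist_commute)
  have "s \<le> t + d" unfolding s_def t_def d_def using dist_triangle[of x p q] by (simp add: dist_commute)
  moreover have "t \<le> s + d" unfolding s_def t_def d_def using dist_triangle[of x q p] by (simp add: dist_commute)
  ultimately have d2: "\<bar>s - t\<bar> \<le> d" by linarith
  have pos: "2 * s * t > 0" using assms s_def t_def by simp
  have "d\<^sup>2 \<le> (s+t)\<^sup>2" using d1 by (intro power_mono) (auto simp: d_def)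
  moreover have "\<bar>s-t\<bar>\<^sup>2 \<le> d\<^sup>2" using d2 by (intro power_mono) auto
  moreover have "(s+t)\<^sup>2 = s\<^sup>2 + t\<^sup>2 + 2 * s * t" by (simp add: power2_sum)
  moreover have "\<bar>s-t\<bar>\<^sup>2 = s\<^sup>2 + t\<^sup>2 - 2 * s * t" by (simp add: power2_diff)
  ultimately have i1: "-(2 * s * t) \<le> s\<^sup>2 + t\<^sup>2 - d\<^sup>2" and i2: "s\<^sup>2 + t\<^sup>2 - d\<^sup>2 \<le> 2 * s * t"
    by linarith+
  have "-1 \<le> (s\<^sup>2 + t\<^sup>2 - d\<^sup>2) / (2 * s * t)" using i1 pos by (simp add: le_divide_eq)
  moreover have "(s\<^sup>2 + t\<^sup>2 - d\<^sup>2) / (2 * s * t) \<le> 1" using i2 pos by (simp add: divide_le_eq)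
  ultimately show ?thesis unfolding s_def t_def d_def by simp
qed

lemma cos_cangle:
  fixes x p q :: "'a::metric_space"
  assumes "dist x p > 0" "dist x q > 0"
  shows "cos (cangle x p q) = ((dist x p)\<^sup>2 + (dist x q)\<^sup>2 - (dist p q)\<^sup>2) / (2 * dist x p * dist x q)"
  using cangle_cos_arg_bounded[OF assms] unfolding cangle_def by (simp add: cos_arccos)

lemma cangle_bounds:
  fixes x p q :: "'a::metric_space"
  assumes "dist x p > 0" "dist x q > 0"
  shows "0 \<le> cangle x p q \<and> cangle x p q \<le> pi"
  using cangle_cos_arg_bounded[OF assms] unfolding cangle_def by (simp add: arccos_lbound arccos_ubound)

lemma dist_sq_cangle:
  fixes x p q :: "'a::metric_space"
  assumes "dist x p > 0" "dist x q > 0"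
  shows "(dist p q)\<^sup>2 = (dist x p)\<^sup>2 + (dist x q)\<^sup>2 - 2 * dist x p * dist x q * cos (cangle x p q)"
  using cos_cangle[OF assms] assms by (simp add: field_simps)

lemma cangle_geod_mono_left:
  fixes x a p :: "'a::complete_space"
  assumes H: "hadamard TYPE('a)" and px: "dist x p > 0" and s': "0 < s'" "s' \<le> s" and s: "s \<le> dist x a"
  shows "cangle x (geod x a s') p \<le> cangle x (geod x a s) p"
proof -
  define l where "l = s' / s"
  have spos: "s > 0" using s' by simp
  have l: "0 < l" "l \<le> 1" using s' spos unfolding l_def by auto
  have s'l: "s' = l * s" using spos unfolding l_def by simp
  define D where "D = dist x p"
  define e where "e = dist (geod x a s) p"
  define e' where "e' = dist (geod x a s') p"
  have cat: "e'\<^sup>2 \<le> (1 - l) * D\<^sup>2 + l * e\<^sup>2 - l * (1 - l) * s\<^sup>2"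
    using geod_CAT0_ineq[OF H, of s x a l p] spos s l unfolding e'_def e_def D_def s'l by simp
  have ds: "dist x (geod x a s) = s" using dist_geod[OF H, of s x a] spos s by simp
  have ds': "dist x (geod x a s') = s'" using dist_geod[OF H, of s' x a] s' s by simp
  define N where "N = s\<^sup>2 + D\<^sup>2 - e\<^sup>2"
  define N' where "N' = s'\<^sup>2 + D\<^sup>2 - e'\<^sup>2"
  have "N' \<ge> l * N" using cat unfolding N_def N'_def s'l by (simp add: algebra_simps power2_eq_square)
  have Dpos: "D > 0" using px D_def by simp
  have "N / (2 * s * D) = (l * N) / (2 * s' * D)" using l spos Dpos unfolding s'l by (simp add: field_simps)
  also have "\<dots> \<le> N' / (2 * s' * D)"
    using \<open>N' \<ge> l * N\<close> s' Dpos by (intro divide_right_mono) auto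
  finally have r: "N / (2 * s * D) \<le> N' / (2 * s' * D)" .
  have R: "N / (2 * s * D) \<in> {-1..1}" using cangle_cos_arg_bounded[of x "geod x a s" p] ds spos px
    unfolding N_def D_def e_def by simp
  have R': "N' / (2 * s' * D) \<in> {-1..1}" using cangle_cos_arg_bounded[of x "geod x a s'" p] ds' s' px
    unfolding N'_def D_def e'_def by simp
  have "arccos (N' / (2 * s' * D)) \<le> arccos (N / (2 * s * D))"
    using R R' r by (intro arccos_le_arccos) auto
  then show ?thesis unfolding cangle_def ds ds' N_def N'_def D_def e_def e'_def .
qed

lemma cangle_geod_mono_right:
  fixes x a p :: "'a::complete_space"
  assumes "hadamard TYPE('a)" and "dist x p > 0" and "0 < s'" "s' \<le> s" and "s \<le> dist x a"
  shows "cangle x p (geod x a s') \<le> cangle x p (geod x a s)"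
  using cangle_geod_mono_left[OF assms] by (simp add: cangle_commute)

lemma cangle_geod_mono:
  fixes x a b :: "'a::complete_space"
  assumes H: "hadamard TYPE('a)"
    and s: "0 < s" "s \<le> s'" "s' \<le> dist x a" and t: "0 < t" "t \<le> t'" "t' \<le> dist x b"
  shows "cangle x (geod x a s) (geod x b t) \<le> cangle x (geod x a s') (geod x b t')"
proof -
  have "cangle x (geod x a s) (geod x b t) \<le> cangle x (geod x a s') (geod x b t)"
    using cangle_geod_mono_left[OF H dist_geod_pos[OF H t(1)] s(1,2)] s t by simp
  also have "\<dots> \<le> cangle x (geod x a s') (geod x b t')"
    using cangle_geod_mono_right[OF H dist_geod_pos[OF H] t(1,2)] s t by simp
  finally show ?thesis .
qed

lemma cangle_geod_nonneg:
  fixes x a b :: "'a::complete_space"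
  assumes H: "hadamard TYPE('a)" and "0 < s" "s \<le> dist x a" "0 < t" "t \<le> dist x b"
  shows "0 \<le> cangle x (geod x a s) (geod x b t)"
  using cangle_bounds[OF dist_geod_pos[OF H assms(2,3)] dist_geod_pos[OF H assms(4,5)]] by simp

section \<open>Aleksandrov angles\<close>

lemma mono_box_Inf:
  fixes f :: "real \<Rightarrow> real \<Rightarrow> real" and da db :: real
  defines "L \<equiv> Inf ((\<lambda>(s, t). f s t) ` ({0<..da} \<times> {0<..db}))"
  assumes da: "0 < da" and db: "0 < db" and bdd: "bdd_below ((\<lambda>(s, t). f s t) ` ({0<..da} \<times> {0<..db}))"
    and mono: "\<And>s t s' t'. 0 < s \<Longrightarrow> s \<le> s' \<Longrightarrow> s' \<le> da \<Longrightarrow> 0 < t \<Longrightarrow> t \<le> t' \<Longrightarrow> t' \<le> db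
      \<Longrightarrow> f s t \<le> f s' t'"
  shows "\<And>s t. 0 < s \<Longrightarrow> s \<le> da \<Longrightarrow> 0 < t \<Longrightarrow> t \<le> db \<Longrightarrow> L \<le> f s t"
    and "0 < e \<Longrightarrow> \<exists>\<eta>>0. \<eta> \<le> da \<and> \<eta> \<le> db \<and>
      (\<forall>s t. 0 < s \<longrightarrow> s < \<eta> \<longrightarrow> 0 < t \<longrightarrow> t < \<eta> \<longrightarrow> f s t < L + e)"
    and "((\<lambda>(s, t). f s t) \<longlongrightarrow> L) (at_right 0 \<times>\<^sub>F at_right 0)"
proof -
  show lower: "L \<le> f s t" if "0 < s" "s \<le> da" "0 < t" "t \<le> db" for s t
    unfolding L_def using that by (intro cInf_lower[OF _ bdd] image_eqI[where x="(s, t)"]) auto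
  show small: "\<exists>\<eta>>0. \<eta> \<le> da \<and> \<eta> \<le> db \<and>
      (\<forall>s t. 0 < s \<longrightarrow> s < \<eta> \<longrightarrow> 0 < t \<longrightarrow> t < \<eta> \<longrightarrow> f s t < L + e)" if e: "0 < e" for e
  proof -
    have ne: "(\<lambda>(s, t). f s t) ` ({0<..da} \<times> {0<..db}) \<noteq> {}" using da db by auto
    have "L < L + e" using e by simp
    then obtain y where "y \<in> (\<lambda>(s, t). f s t) ` ({0<..da} \<times> {0<..db})" "y < L + e"
      using cInf_lessD[OF ne] unfolding L_def by blast
    then obtain s0 t0 where st0: "0 < s0" "s0 \<le> da" "0 < t0" "t0 \<le> db" "f s0 t0 < L + e" by auto
    show ?thesis
    proof (intro exI[of _ "min s0 t0"] conjI allI impI)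
      fix s t assume "0 < s" "s < min s0 t0" "0 < t" "t < min s0 t0"
      then have "f s t \<le> f s0 t0" using st0 by (intro mono) auto
      then show "f s t < L + e" using st0 by simp
    qed (use st0 in auto)
  qed
  show "((\<lambda>(s, t). f s t) \<longlongrightarrow> L) (at_right 0 \<times>\<^sub>F at_right 0)"
  proof (rule tendstoI)
    fix e :: real assume e: "e > 0"
    obtain \<eta> where \<eta>: "\<eta> > 0" "\<eta> \<le> da" "\<eta> \<le> db"
      "\<And>s t. 0 < s \<Longrightarrow> s < \<eta> \<Longrightarrow> 0 < t \<Longrightarrow> t < \<eta> \<Longrightarrow> f s t < L + e"
      using small[OF e] by blast
    have ev: "eventually (\<lambda>s. s \<in> {0<..<\<eta>}) (at_right (0::real))"
      using eventually_at_right_real[OF \<eta>(1)] .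
    show "eventually (\<lambda>z. dist ((\<lambda>(s, t). f s t) z) L < e) (at_right 0 \<times>\<^sub>F at_right 0)"
      unfolding eventually_prod_filter
    proof (intro exI conjI)
      show "\<forall>s t. s \<in> {0<..<\<eta>} \<longrightarrow> t \<in> {0<..<\<eta>} \<longrightarrow> dist ((\<lambda>(s, t). f s t) (s, t)) L < e"
      proof (intro allI impI)
        fix s t :: real assume "s \<in> {0<..<\<eta>}" "t \<in> {0<..<\<eta>}"
        then have "f s t < L + e" "L \<le> f s t" using \<eta> by (auto intro!: lower)
        then show "dist ((\<lambda>(s, t). f s t) (s, t)) L < e" by (simp add: dist_real_def)
      qed
    qed (use ev in auto)
  qed
qed

lemma cangle_geod_box:
  fixes x a b :: "'a::complete_space"
  assumes H: "hadamard TYPE('a)" and ax: "a \<noteq> x" and bx: "b \<noteq> x"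
  shows "0 < dist x a" "0 < dist x b"
    and "bdd_below ((\<lambda>(s, t). cangle x (geod x a s) (geod x b t)) ` ({0<..dist x a} \<times> {0<..dist x b}))"
    and "\<And>s t s' t'. 0 < s \<Longrightarrow> s \<le> s' \<Longrightarrow> s' \<le> dist x a \<Longrightarrow> 0 < t \<Longrightarrow> t \<le> t' \<Longrightarrow> t' \<le> dist x b
      \<Longrightarrow> cangle x (geod x a s) (geod x b t) \<le> cangle x (geod x a s') (geod x b t')"
proof -
  show "0 < dist x a" "0 < dist x b" using ax bx by (simp_all add: dist_commute)
  show "bdd_below ((\<lambda>(s, t). cangle x (geod x a s) (geod x b t)) ` ({0<..dist x a} \<times> {0<..dist x b}))"
    by (rule bdd_belowI2[where m=0]) (clarsimp simp: cangle_geod_nonneg[OF H])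
qed (rule cangle_geod_mono[OF H])

lemma alex_angle_eq_Inf:
  fixes x a b :: "'a::complete_space"
  assumes H: "hadamard TYPE('a)" and ax: "a \<noteq> x" and bx: "b \<noteq> x"
  shows "alex_angle x a b
    = Inf ((\<lambda>(s, t). cangle x (geod x a s) (geod x b t)) ` ({0<..dist x a} \<times> {0<..dist x b}))"
proof -
  have "at_right (0::real) \<noteq> bot" using trivial_limit_at_right_real[of 0] unfolding trivial_limit_def .
  then have "at_right (0::real) \<times>\<^sub>F at_right (0::real) \<noteq> bot" by (simp add: prod_filter_eq_bot)
  then show ?thesis
    unfolding alex_angle_def by (rule tendsto_Lim) (rule mono_box_Inf(3)[OF cangle_geod_box[OF H ax bx]])
qed

lemma alex_angle_le_cangle_geod:
  fixes x a b :: "'a::complete_space"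
  assumes H: "hadamard TYPE('a)" and ax: "a \<noteq> x" and bx: "b \<noteq> x"
    and "0 < s" "s \<le> dist x a" "0 < t" "t \<le> dist x b"
  shows "alex_angle x a b \<le> cangle x (geod x a s) (geod x b t)"
  unfolding alex_angle_eq_Inf[OF H ax bx]
  by (rule mono_box_Inf(1)[OF cangle_geod_box[OF H ax bx] assms(4-7)])

lemma cangle_geod_lt_alex_angle:
  fixes x a b :: "'a::complete_space"
  assumes H: "hadamard TYPE('a)" and ax: "a \<noteq> x" and bx: "b \<noteq> x" and e: "0 < e"
  obtains \<eta> where "0 < \<eta>" "\<eta> \<le> dist x a" "\<eta> \<le> dist x b"
    "\<And>s t. 0 < s \<Longrightarrow> s < \<eta> \<Longrightarrow> 0 < t \<Longrightarrow> t < \<eta> \<Longrightarrow>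
      cangle x (geod x a s) (geod x b t) < alex_angle x a b + e"
  using mono_box_Inf(2)[OF cangle_geod_box[OF H ax bx] e] unfolding alex_angle_eq_Inf[OF H ax bx]
  by blast

lemma alex_angle_le_cangle:
  fixes x a b :: "'a::complete_space"
  assumes H: "hadamard TYPE('a)" and ax: "a \<noteq> x" and bx: "b \<noteq> x"
  shows "alex_angle x a b \<le> cangle x a b"
  using alex_angle_le_cangle_geod[OF H ax bx, of "dist x a" "dist x b"] ax bx
    geod_geodesic[OF H, of x a] geod_geodesic[OF H, of x b] by simp

lemma alex_angle_nonneg:
  fixes x a b :: "'a::complete_space"
  assumes H: "hadamard TYPE('a)" and ax: "a \<noteq> x" and bx: "b \<noteq> x"
  shows "0 \<le> alex_angle x a b"
  unfolding alex_angle_eq_Inf[OF H ax bx] using cangle_geod_box(1,2)[OF H ax bx]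
  by (intro cInf_greatest) (auto intro!: cangle_geod_nonneg[OF H])

lemma alex_angle_le_pi:
  fixes x a b :: "'a::complete_space"
  assumes H: "hadamard TYPE('a)" and ax: "a \<noteq> x" and bx: "b \<noteq> x"
  shows "alex_angle x a b \<le> pi"
  using alex_angle_le_cangle[OF assms] cangle_bounds[of x a b] ax bx by (simp add: dist_commute)

lemma alex_angle_self:
  fixes x a :: "'a::complete_space"
  assumes H: "hadamard TYPE('a)" and ax: "a \<noteq> x"
  shows "alex_angle x a a = 0"
proof -
  have "cangle x a a = 0" unfolding cangle_def using ax
    by (simp add: power2_eq_square field_simps)
  then show ?thesis using alex_angle_le_cangle[OF H ax ax] alex_angle_nonneg[OF H ax ax] by simp
qed

lemma alex_angle_commute_le:
  fixes x a b :: "'a::complete_space"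
  assumes H: "hadamard TYPE('a)" and ax: "a \<noteq> x" and bx: "b \<noteq> x"
  shows "alex_angle x a b \<le> alex_angle x b a"
proof (rule field_le_epsilon)
  fix e :: real assume e: "0 < e"
  obtain \<eta> where \<eta>: "\<eta> > 0" "\<eta> \<le> dist x b" "\<eta> \<le> dist x a"
    "\<And>s t. 0 < s \<Longrightarrow> s < \<eta> \<Longrightarrow> 0 < t \<Longrightarrow> t < \<eta> \<Longrightarrow>
      cangle x (geod x b s) (geod x a t) < alex_angle x b a + e"
    using cangle_geod_lt_alex_angle[OF H bx ax e] by blast
  have "alex_angle x a b \<le> cangle x (geod x a (\<eta>/2)) (geod x b (\<eta>/2))"
    using alex_angle_le_cangle_geod[OF H ax bx] \<eta> by simp
  also have "\<dots> = cangle x (geod x b (\<eta>/2)) (geod x a (\<eta>/2))" by (rule cangle_commute)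
  also have "\<dots> < alex_angle x b a + e" using \<eta>(4)[of "\<eta>/2" "\<eta>/2"] \<eta>(1) by simp
  finally show "alex_angle x a b \<le> alex_angle x b a + e" by simp
qed

lemma alex_angle_commute:
  fixes x a b :: "'a::complete_space"
  assumes H: "hadamard TYPE('a)" and ax: "a \<noteq> x" and bx: "b \<noteq> x"
  shows "alex_angle x a b = alex_angle x b a"
  using alex_angle_commute_le[OF H ax bx] alex_angle_commute_le[OF H bx ax] by simp

lemma norm_cis_diff_sq:
  "(cmod (complex_of_real r1 * cis a - complex_of_real r2 * cis b))\<^sup>2
     = r1\<^sup>2 + r2\<^sup>2 - 2 * r1 * r2 * cos (a - b)"
proof -
  have "(cmod (complex_of_real r1 * cis a - complex_of_real r2 * cis b))\<^sup>2
      = (r1 * cos a - r2 * cos b)\<^sup>2 + (r1 * sin a - r2 * sin b)\<^sup>2"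
    by (simp add: cmod_power2)
  also have "\<dots> = r1\<^sup>2 * ((sin a)\<^sup>2 + (cos a)\<^sup>2) + r2\<^sup>2 * ((sin b)\<^sup>2 + (cos b)\<^sup>2)
       - 2 * r1 * r2 * (cos a * cos b + sin a * sin b)"
    by algebra
  also have "\<dots> = r1\<^sup>2 + r2\<^sup>2 - 2 * r1 * r2 * cos (a - b)"
    unfolding sin_cos_squared_add cos_diff by simp
  finally show ?thesis .
qed

lemma dist_le_cmod_of_cangle_le:
  fixes x p q :: "'a::metric_space"
  assumes p: "dist x p > 0" and q: "dist x q > 0" and "cangle x p q \<le> \<theta>" "\<theta> \<le> pi"
  shows "dist p q \<le> cmod (complex_of_real (dist x p) * cis \<phi> - complex_of_real (dist x q) * cis (\<phi> + \<theta>))"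
proof -
  have "cos \<theta> \<le> cos (cangle x p q)"
    using cangle_bounds[OF p q] assms(3,4) by (intro cos_monotone_0_pi_le) auto
  then have "dist x p * dist x q * cos \<theta> \<le> dist x p * dist x q * cos (cangle x p q)"
    using p q by (intro mult_left_mono) auto
  then have "(dist p q)\<^sup>2 \<le> (dist x p)\<^sup>2 + (dist x q)\<^sup>2 - 2 * dist x p * dist x q * cos \<theta>"
    using dist_sq_cangle[OF p q] by simp
  also have "\<dots> = (cmod (complex_of_real (dist x p) * cis \<phi> - complex_of_real (dist x q) * cis (\<phi> + \<theta>)))\<^sup>2"
    unfolding norm_cis_diff_sq by simp
  finally show ?thesis by (rule power2_le_imp_le) simp
qed

lemma cmod_less_dist_of_cangle_gt:
  fixes x p q :: "'a::metric_space"
  assumes p: "dist x p > 0" and q: "dist x q > 0" and "\<theta> < cangle x p q" "0 \<le> \<theta>"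
  shows "cmod (complex_of_real (dist x p) * cis \<phi> - complex_of_real (dist x q) * cis (\<phi> + \<theta>)) < dist p q"
proof -
  have "cos (cangle x p q) < cos \<theta>"
    using cangle_bounds[OF p q] assms(3,4) by (intro cos_monotone_0_pi) auto
  then have "dist x p * dist x q * cos (cangle x p q) < dist x p * dist x q * cos \<theta>"
    using p q by (intro mult_strict_left_mono) auto
  then have "(dist x p)\<^sup>2 + (dist x q)\<^sup>2 - 2 * dist x p * dist x q * cos \<theta> < (dist p q)\<^sup>2"
    using dist_sq_cangle[OF p q] by simp
  then have "(cmod (complex_of_real (dist x p) * cis \<phi> - complex_of_real (dist x q) * cis (\<phi> + \<theta>)))\<^sup>2 < (dist p q)\<^sup>2"
    unfolding norm_cis_diff_sq by simp
  then show ?thesis by (rule power2_less_imp_less) simp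
qed

lemma ray_meets_chord:
  fixes t \<theta> \<alpha> :: real
  assumes t: "0 < t" and \<theta>: "0 < \<theta>" "\<theta> < \<alpha>" and \<alpha>: "\<alpha> < pi"
  obtains t' where "0 < t'" "t' \<le> t"
    "cmod (complex_of_real t * cis 0 - complex_of_real t' * cis \<theta>)
       + cmod (complex_of_real t' * cis \<theta> - complex_of_real t * cis \<alpha>)
     = cmod (complex_of_real t * cis 0 - complex_of_real t * cis \<alpha>)"
proof -
  define sa where "sa = sin \<theta>"
  define sb where "sb = sin (\<alpha> - \<theta>)"
  define sal where "sal = sin \<alpha>"
  have sa: "sa > 0" unfolding sa_def using \<theta> \<alpha> by (intro sin_gt_zero) auto
  have sb: "sb > 0" unfolding sb_def using \<theta> \<alpha> by (intro sin_gt_zero) auto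
  have sal: "sal > 0" unfolding sal_def using \<theta> \<alpha> by (intro sin_gt_zero) auto
  define Den where "Den = t * sa + t * sb"
  have Den: "Den > 0" unfolding Den_def using t sa sb by (simp add: add_pos_pos)
  define t' where "t' = t * t * sal / Den"
  define m where "m = t * sa / Den"
  have t'pos: "t' > 0" unfolding t'_def using t sal Den by simp
  have m01: "0 \<le> m" "m \<le> 1" unfolding m_def using t sa sb Den unfolding Den_def
    by (auto simp: divide_le_eq)
  have "sal = sa * cos (\<alpha> - \<theta>) + cos \<theta> * sb"
    unfolding sal_def sa_def sb_def using sin_add[of \<theta> "\<alpha> - \<theta>"] by simp
  also have "\<dots> \<le> sa * 1 + 1 * sb"
    using sa sb by (intro add_mono mult_left_mono mult_right_mono) auto
  finally have "t * sal \<le> Den"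
    using t unfolding Den_def by (simp add: distrib_left[symmetric] mult_left_mono)
  then have "t * (t * sal) \<le> t * Den" using t by (intro mult_left_mono) auto
  then have t't: "t' \<le> t" unfolding t'_def using Den by (simp add: divide_le_eq mult.assoc)
  define x0 where "x0 = complex_of_real t * cis 0"
  define x2 where "x2 = complex_of_real t * cis \<alpha>"
  define y where "y = complex_of_real t' * cis \<theta>"
  have yeq: "y = complex_of_real (1 - m) * x0 + complex_of_real m * x2"
  proof (rule complex_eqI)
    have e1: "sal * cos \<theta> = sb + sa * cos \<alpha>" unfolding sal_def sb_def sa_def
      by (simp add: sin_diff algebra_simps)
    have m1: "1 - m = t * sb / Den" using Den unfolding m_def Den_def by (simp add: field_simps)
    have "t' * cos \<theta> = t * t * (sb + sa * cos \<alpha>) / Den" unfolding t'_def e1[symmetric] by simp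
    also have "\<dots> = (t * sb / Den) * t + (t * sa / Den) * t * cos \<alpha>" using Den
      by (simp add: field_simps)
    finally have "t' * cos \<theta> = (1 - m) * t + m * t * cos \<alpha>" using m1 unfolding m_def by simp
    then show "Re y = Re (complex_of_real (1 - m) * x0 + complex_of_real m * x2)"
      unfolding y_def x0_def x2_def by simp
    have "t' * sin \<theta> = m * t * sin \<alpha>"
      unfolding t'_def m_def sa_def sal_def by (simp add: field_simps)
    then show "Im y = Im (complex_of_real (1 - m) * x0 + complex_of_real m * x2)"
      unfolding y_def x0_def x2_def by simp
  qed
  have e1: "x0 - y = complex_of_real m * (x0 - x2)" using yeq by (simp add: algebra_simps)
  have e2: "y - x2 = complex_of_real (1 - m) * (x0 - x2)" using yeq by (simp add: algebra_simps)
  have "cmod (x0 - y) = m * cmod (x0 - x2)" unfolding e1 norm_mult norm_of_real using m01 by simp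
  moreover have "cmod (y - x2) = (1 - m) * cmod (x0 - x2)"
    unfolding e2 norm_mult norm_of_real using m01 by simp
  ultimately have "cmod (x0 - y) + cmod (y - x2) = cmod (x0 - x2)" by (simp add: algebra_simps)
  then show ?thesis using that t'pos t't unfolding x0_def x2_def y_def by blast
qed

text \<open>If the angle at x between a and b exceeded the sum through c, the comparison triangles
 for points at distance about t on the three geodesics would yield a broken path
 p, q, r shorter than d(p, r), contradicting the triangle inequality.\<close>
lemma alex_angle_triangle:
  fixes x a b c :: "'a::complete_space"
  assumes H: "hadamard TYPE('a)" and ax: "a \<noteq> x" and bx: "b \<noteq> x" and cx: "c \<noteq> x"
  shows "alex_angle x a b \<le> alex_angle x a c + alex_angle x c b"
proof (rule ccontr)
  define A where "A = alex_angle x a c"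
  define B where "B = alex_angle x c b"
  define C where "C = alex_angle x a b"
  assume "\<not> alex_angle x a b \<le> alex_angle x a c + alex_angle x c b"
  then have CAB: "C > A + B" unfolding A_def B_def C_def by simp
  define \<delta> where "\<delta> = (C - A - B) / 4"
  have \<delta>: "\<delta> > 0" using CAB unfolding \<delta>_def by simp
  obtain \<eta>1 where \<eta>1: "\<eta>1 > 0" "\<eta>1 \<le> dist x a" "\<eta>1 \<le> dist x c"
    "\<And>s t. 0 < s \<Longrightarrow> s < \<eta>1 \<Longrightarrow> 0 < t \<Longrightarrow> t < \<eta>1 \<Longrightarrow>
      cangle x (geod x a s) (geod x c t) < A + \<delta>"
    using cangle_geod_lt_alex_angle[OF H ax cx \<delta>] unfolding A_def by blast
  obtain \<eta>2 where \<eta>2: "\<eta>2 > 0" "\<eta>2 \<le> dist x c" "\<eta>2 \<le> dist x b"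
    "\<And>s t. 0 < s \<Longrightarrow> s < \<eta>2 \<Longrightarrow> 0 < t \<Longrightarrow> t < \<eta>2 \<Longrightarrow>
      cangle x (geod x c s) (geod x b t) < B + \<delta>"
    using cangle_geod_lt_alex_angle[OF H cx bx \<delta>] unfolding B_def by blast
  define t where "t = min \<eta>1 \<eta>2 / 2"
  have t: "0 < t" "t < \<eta>1" "t < \<eta>2" using \<eta>1 \<eta>2 unfolding t_def by auto
  define \<alpha> where "\<alpha> = C - \<delta>"
  define \<theta> where "\<theta> = A + \<delta>"
  have th0: "0 < \<theta>" using alex_angle_nonneg[OF H ax cx] \<delta> unfolding \<theta>_def A_def by simp
  have tha: "\<theta> < \<alpha>" using CAB alex_angle_nonneg[OF H cx bx]
    unfolding \<theta>_def \<alpha>_def \<delta>_def B_def by (simp add: field_simps)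
  have api: "\<alpha> < pi" using alex_angle_le_pi[OF H ax bx] \<delta> unfolding \<alpha>_def C_def by simp
  obtain t' where t': "0 < t'" "t' \<le> t" and seg:
    "cmod (complex_of_real t * cis 0 - complex_of_real t' * cis \<theta>)
       + cmod (complex_of_real t' * cis \<theta> - complex_of_real t * cis \<alpha>)
     = cmod (complex_of_real t * cis 0 - complex_of_real t * cis \<alpha>)"
    using ray_meets_chord[OF t(1) th0 tha api] by blast
  define p where "p = geod x a t"
  define q where "q = geod x c t'"
  define r where "r = geod x b t"
  have dp: "dist x p = t" unfolding p_def using dist_geod[OF H, of t x a] t \<eta>1 by simp
  have dq: "dist x q = t'" unfolding q_def using dist_geod[OF H, of t' x c] t' t \<eta>1 by simp
  have dr: "dist x r = t" unfolding r_def using dist_geod[OF H, of t x b] t \<eta>2 by simp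
  have "cangle x p q < \<theta>" unfolding p_def q_def \<theta>_def by (rule \<eta>1(4)) (use t t' in auto)
  then have d1: "dist p q \<le> cmod (complex_of_real t * cis 0 - complex_of_real t' * cis \<theta>)"
    using dist_le_cmod_of_cangle_le[of x p q \<theta> 0] dp dq t t' tha api by simp
  have "cangle x q r < B + \<delta>" unfolding q_def r_def by (rule \<eta>2(4)) (use t t' in auto)
  moreover have "\<alpha> - \<theta> = B + 2 * \<delta>" unfolding \<alpha>_def \<theta>_def \<delta>_def by (simp add: field_simps)
  ultimately have "cangle x q r \<le> \<alpha> - \<theta>" using \<delta> by linarith
  then have d2: "dist q r \<le> cmod (complex_of_real t' * cis \<theta> - complex_of_real t * cis \<alpha>)"
    using dist_le_cmod_of_cangle_le[of x q r "\<alpha> - \<theta>" \<theta>] dq dr t t' th0 api by simp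
  have "C \<le> cangle x p r" unfolding C_def p_def r_def
    using alex_angle_le_cangle_geod[OF H ax bx, of t t] t \<eta>1 \<eta>2 by linarith
  then have "cmod (complex_of_real t * cis 0 - complex_of_real t * cis \<alpha>) < dist p r"
    using cmod_less_dist_of_cangle_gt[of x p r \<alpha> 0] dp dr t th0 tha \<delta> unfolding \<alpha>_def by simp
  moreover have "dist p r \<le> dist p q + dist q r" by (rule dist_triangle)
  ultimately show False using d1 d2 seg by linarith
qed

lemma alex_angle_triangle4:
  fixes x :: "'a::complete_space"
  assumes H: "hadamard TYPE('a)" and "a \<noteq> x" "b \<noteq> x" "c \<noteq> x" "d \<noteq> x"
  shows "alex_angle x a b \<le> alex_angle x a c + alex_angle x c d + alex_angle x d b"
  using alex_angle_triangle[OF H assms(2,3,4)] alex_angle_triangle[OF H assms(4,3,5)] by simp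

section \<open>Directions\<close>

lemma dir_angle_LIMSEQ:
  fixes x :: "'a::complete_space"
  assumes H: "hadamard TYPE('a)" and s: "dir_cauchy x \<sigma>" and t: "dir_cauchy x \<tau>"
  shows "(\<lambda>n. alex_angle x (\<sigma> n) (\<tau> n)) \<longlonglongrightarrow> dir_angle x \<sigma> \<tau>"
proof -
  have sx: "\<And>n. \<sigma> n \<noteq> x" and tx: "\<And>n. \<tau> n \<noteq> x" using s t unfolding dir_cauchy_def by auto
  have "Cauchy (\<lambda>n. alex_angle x (\<sigma> n) (\<tau> n))"
  proof (rule metric_CauchyI)
    fix e :: real assume e: "0 < e"
    obtain N1 where N1: "\<And>m n. m \<ge> N1 \<Longrightarrow> n \<ge> N1 \<Longrightarrow> alex_angle x (\<sigma> m) (\<sigma> n) < e/2"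
      using s e unfolding dir_cauchy_def by (meson half_gt_zero)
    obtain N2 where N2: "\<And>m n. m \<ge> N2 \<Longrightarrow> n \<ge> N2 \<Longrightarrow> alex_angle x (\<tau> m) (\<tau> n) < e/2"
      using t e unfolding dir_cauchy_def by (meson half_gt_zero)
    show "\<exists>M. \<forall>m\<ge>M. \<forall>n\<ge>M. dist (alex_angle x (\<sigma> m) (\<tau> m)) (alex_angle x (\<sigma> n) (\<tau> n)) < e"
    proof (intro exI allI impI)
      fix m n assume m: "max N1 N2 \<le> m" and n: "max N1 N2 \<le> n"
      have "alex_angle x (\<sigma> m) (\<tau> m) \<le> alex_angle x (\<sigma> m) (\<sigma> n) + alex_angle x (\<sigma> n) (\<tau> n) + alex_angle x (\<tau> n) (\<tau> m)"
        using alex_angle_triangle4[OF H sx tx sx tx] by simp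
      moreover have "alex_angle x (\<sigma> n) (\<tau> n) \<le> alex_angle x (\<sigma> n) (\<sigma> m) + alex_angle x (\<sigma> m) (\<tau> m) + alex_angle x (\<tau> m) (\<tau> n)"
        using alex_angle_triangle4[OF H sx tx sx tx] by simp
      moreover have "alex_angle x (\<sigma> m) (\<sigma> n) < e/2" "alex_angle x (\<sigma> n) (\<sigma> m) < e/2"
        "alex_angle x (\<tau> m) (\<tau> n) < e/2" "alex_angle x (\<tau> n) (\<tau> m) < e/2"
        using N1 N2 m n by auto
      ultimately show "dist (alex_angle x (\<sigma> m) (\<tau> m)) (alex_angle x (\<sigma> n) (\<tau> n)) < e"
        unfolding dist_real_def by linarith
    qed
  qed
  then have "convergent (\<lambda>n. alex_angle x (\<sigma> n) (\<tau> n))" by (rule Cauchy_convergent)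
  then show ?thesis unfolding dir_angle_def by (simp add: convergent_LIMSEQ_iff)
qed

lemma dir_angle_bounds:
  fixes x :: "'a::complete_space"
  assumes H: "hadamard TYPE('a)" and s: "dir_cauchy x \<sigma>" and t: "dir_cauchy x \<tau>"
  shows "0 \<le> dir_angle x \<sigma> \<tau> \<and> dir_angle x \<sigma> \<tau> \<le> pi"
proof -
  have sx: "\<And>n. \<sigma> n \<noteq> x" and tx: "\<And>n. \<tau> n \<noteq> x" using s t unfolding dir_cauchy_def by auto
  have L: "(\<lambda>n. alex_angle x (\<sigma> n) (\<tau> n)) \<longlonglongrightarrow> dir_angle x \<sigma> \<tau>" by (rule dir_angle_LIMSEQ[OF H s t])
  have "0 \<le> dir_angle x \<sigma> \<tau>" by (rule LIMSEQ_le_const[OF L]) (use alex_angle_nonneg[OF H sx tx] in auto)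
  moreover have "dir_angle x \<sigma> \<tau> \<le> pi" by (rule LIMSEQ_le_const2[OF L]) (use alex_angle_le_pi[OF H sx tx] in auto)
  ultimately show ?thesis by simp
qed

lemma dir_angle_triangle:
  fixes x :: "'a::complete_space"
  assumes H: "hadamard TYPE('a)" and s: "dir_cauchy x \<sigma>" and t: "dir_cauchy x \<tau>" and r: "dir_cauchy x \<rho>"
  shows "dir_angle x \<sigma> \<rho> \<le> dir_angle x \<sigma> \<tau> + dir_angle x \<tau> \<rho>"
proof -
  have sx: "\<And>n. \<sigma> n \<noteq> x" and tx: "\<And>n. \<tau> n \<noteq> x" and rx: "\<And>n. \<rho> n \<noteq> x"
    using s t r unfolding dir_cauchy_def by auto
  show ?thesis
    by (rule LIMSEQ_le[OF dir_angle_LIMSEQ[OF H s r] tendsto_add[OF dir_angle_LIMSEQ[OF H s t] dir_angle_LIMSEQ[OF H t r]]])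
       (use alex_angle_triangle[OF H sx rx tx] in auto)
qed

lemma dir_angle_commute:
  fixes x :: "'a::complete_space"
  assumes H: "hadamard TYPE('a)" and s: "dir_cauchy x \<sigma>" and t: "dir_cauchy x \<tau>"
  shows "dir_angle x \<sigma> \<tau> = dir_angle x \<tau> \<sigma>"
proof -
  have sx: "\<And>n. \<sigma> n \<noteq> x" and tx: "\<And>n. \<tau> n \<noteq> x" using s t unfolding dir_cauchy_def by auto
  have "(\<lambda>n. alex_angle x (\<sigma> n) (\<tau> n)) = (\<lambda>n. alex_angle x (\<tau> n) (\<sigma> n))"
    using alex_angle_commute[OF H sx tx] by auto
  then show ?thesis unfolding dir_angle_def by simp
qed

lemma dir_angle_const:
  fixes x a b :: "'a::metric_space"
  shows "dir_angle x (\<lambda>_. a) (\<lambda>_. b) = alex_angle x a b"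
  unfolding dir_angle_def by simp

lemma dir_cauchy_const:
  fixes x a :: "'a::complete_space"
  assumes H: "hadamard TYPE('a)" and ax: "a \<noteq> x"
  shows "dir_cauchy x (\<lambda>_. a)"
  unfolding dir_cauchy_def using alex_angle_self[OF H ax] ax by auto

section \<open>The tangent cone\<close>

lemma tangent_fst_nonneg: "u \<in> tangent x \<Longrightarrow> fst u \<ge> 0"
  unfolding tangent_def by auto

lemma tangent_dir_cauchy: "u \<in> tangent x \<Longrightarrow> fst u \<noteq> 0 \<Longrightarrow> dir_cauchy x (snd u)"
  unfolding tangent_def by auto

lemma tinner_commute:
  fixes x :: "'a::complete_space"
  assumes H: "hadamard TYPE('a)" and u: "u \<in> tangent x" and v: "v \<in> tangent x"
  shows "tinner x u v = tinner x v u"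
proof (cases "fst u = 0 \<or> fst v = 0")
  case True then show ?thesis unfolding tinner_def by auto
next
  case False
  then show ?thesis unfolding tinner_def
    using dir_angle_commute[OF H tangent_dir_cauchy[OF u] tangent_dir_cauchy[OF v]] by simp
qed

lemma abs_tinner_le:
  fixes x :: "'a::metric_space"
  assumes u: "u \<in> tangent x" and v: "v \<in> tangent x"
  shows "\<bar>tinner x u v\<bar> \<le> fst u * fst v"
proof -
  have "\<bar>tinner x u v\<bar> = fst u * fst v * \<bar>cos (dir_angle x (snd u) (snd v))\<bar>"
    unfolding tinner_def using tangent_fst_nonneg[OF u] tangent_fst_nonneg[OF v] by (simp add: abs_mult)
  also have "\<dots> \<le> fst u * fst v * 1"
    using tangent_fst_nonneg[OF u] tangent_fst_nonneg[OF v] by (intro mult_left_mono) auto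
  finally show ?thesis by simp
qed

lemma tdist_arg_ge:
  fixes x :: "'a::metric_space"
  assumes u: "u \<in> tangent x" and v: "v \<in> tangent x"
  shows "(fst u)\<^sup>2 + (fst v)\<^sup>2 - 2 * tinner x u v \<ge> (fst u - fst v)\<^sup>2"
proof -
  have "tinner x u v \<le> fst u * fst v" using abs_tinner_le[OF u v] by simp
  then show ?thesis by (simp add: power2_diff)
qed

lemma tdist_sq:
  fixes x :: "'a::metric_space"
  assumes u: "u \<in> tangent x" and v: "v \<in> tangent x"
  shows "(tdist x u v)\<^sup>2 = (fst u)\<^sup>2 + (fst v)\<^sup>2 - 2 * tinner x u v" and "tdist x u v \<ge> 0"
proof -
  have "(fst u)\<^sup>2 + (fst v)\<^sup>2 - 2 * tinner x u v \<ge> 0"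
    using tdist_arg_ge[OF u v] by (meson order_trans zero_le_power2)
  then show "(tdist x u v)\<^sup>2 = (fst u)\<^sup>2 + (fst v)\<^sup>2 - 2 * tinner x u v" "tdist x u v \<ge> 0"
    unfolding tdist_def by simp_all
qed

lemma tinner_cong_tdist_zero:
  fixes x :: "'a::complete_space"
  assumes H: "hadamard TYPE('a)" and u: "u \<in> tangent x" and v: "v \<in> tangent x" and w: "w \<in> tangent x"
    and d0: "tdist x u v = 0"
  shows "tinner x u w = tinner x v w"
proof -
  have E: "(fst u)\<^sup>2 + (fst v)\<^sup>2 - 2 * tinner x u v = 0" using tdist_sq[OF u v] d0 by simp
  then have "(fst u - fst v)\<^sup>2 \<le> 0" using tdist_arg_ge[OF u v] by simp
  then have eq: "fst u = fst v" by simp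
  show ?thesis
  proof (cases "fst u = 0 \<or> fst w = 0")
    case True then show ?thesis unfolding tinner_def using eq by auto
  next
    case False
    then have fu: "fst u > 0" and fw: "fst w \<noteq> 0" using tangent_fst_nonneg[OF u] by auto
    have su: "dir_cauchy x (snd u)" using tangent_dir_cauchy[OF u] fu by simp
    have sv: "dir_cauchy x (snd v)" using tangent_dir_cauchy[OF v] fu eq by simp
    have sw: "dir_cauchy x (snd w)" using tangent_dir_cauchy[OF w] fw by simp
    have "2 * (fst u)\<^sup>2 * (1 - cos (dir_angle x (snd u) (snd v))) = 0"
      using E eq unfolding tinner_def by (simp add: power2_eq_square algebra_simps)
    then have c1: "cos (dir_angle x (snd u) (snd v)) = 1" using fu by simp
    have r: "0 \<le> dir_angle x (snd u) (snd v)" "dir_angle x (snd u) (snd v) \<le> pi"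
      using dir_angle_bounds[OF H su sv] by auto
    have z: "dir_angle x (snd u) (snd v) = 0"
    proof (rule ccontr)
      assume "dir_angle x (snd u) (snd v) \<noteq> 0"
      then have "cos (dir_angle x (snd u) (snd v)) < cos 0"
        using r by (intro cos_monotone_0_pi) auto
      then show False using c1 by simp
    qed
    have "dir_angle x (snd u) (snd w) \<le> dir_angle x (snd u) (snd v) + dir_angle x (snd v) (snd w)"
      by (rule dir_angle_triangle[OF H su sv sw])
    moreover have "dir_angle x (snd v) (snd w) \<le> dir_angle x (snd v) (snd u) + dir_angle x (snd u) (snd w)"
      by (rule dir_angle_triangle[OF H sv su sw])
    moreover have "dir_angle x (snd v) (snd u) = 0" using z dir_angle_commute[OF H su sv] by simp
    ultimately have "dir_angle x (snd u) (snd w) = dir_angle x (snd v) (snd w)" using z by simp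
    then show ?thesis unfolding tinner_def using eq by simp
  qed
qed

lemma cos_diff_sq_le:
  fixes r q \<alpha> \<beta> \<gamma> :: real
  assumes "0 \<le> r" "0 \<le> q" "\<bar>\<alpha> - \<beta>\<bar> \<le> \<gamma>" "\<gamma> \<le> pi"
  shows "(r * cos \<alpha> - q * cos \<beta>)\<^sup>2 \<le> r\<^sup>2 + q\<^sup>2 - 2 * r * q * cos \<gamma>"
proof -
  have "cos \<gamma> \<le> cos \<bar>\<alpha> - \<beta>\<bar>" using assms by (intro cos_monotone_0_pi_le) auto
  also have "cos \<bar>\<alpha> - \<beta>\<bar> = cos (\<alpha> - \<beta>)"
    using cos_minus[of "\<alpha> - \<beta>"] by (simp add: abs_if)
  finally have c: "r * q * cos \<gamma> \<le> r * q * cos (\<alpha> - \<beta>)" using assms by (intro mult_left_mono) auto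
  have "r\<^sup>2 + q\<^sup>2 - 2 * r * q * cos (\<alpha> - \<beta>) = (cmod (complex_of_real r * cis \<alpha> - complex_of_real q * cis \<beta>))\<^sup>2"
    by (simp add: norm_cis_diff_sq)
  also have "\<dots> = (r * cos \<alpha> - q * cos \<beta>)\<^sup>2 + (r * sin \<alpha> - q * sin \<beta>)\<^sup>2"
    by (simp add: cmod_power2)
  finally have "(r * cos \<alpha> - q * cos \<beta>)\<^sup>2 \<le> r\<^sup>2 + q\<^sup>2 - 2 * r * q * cos (\<alpha> - \<beta>)" by simp
  then show ?thesis using c by simp
qed

lemma tinner_lipschitz:
  fixes x :: "'a::complete_space"
  assumes H: "hadamard TYPE('a)" and f: "f \<in> tangent x" and a: "a \<in> tangent x" and b: "b \<in> tangent x"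
  shows "\<bar>tinner x f a - tinner x f b\<bar> \<le> fst f * tdist x a b"
proof -
  have td: "(tdist x a b)\<^sup>2 = (fst a)\<^sup>2 + (fst b)\<^sup>2 - 2 * tinner x a b" "tdist x a b \<ge> 0"
    using tdist_sq[OF a b] by auto
  have f0: "fst f \<ge> 0" using tangent_fst_nonneg[OF f] .
  show ?thesis
  proof (cases "fst f = 0")
    case True then show ?thesis unfolding tinner_def by simp
  next
    case fnz: False
    show ?thesis
    proof (cases "fst a = 0 \<or> fst b = 0")
      case True
      then have "\<bar>tinner x f a - tinner x f b\<bar> \<le> fst f * \<bar>fst a - fst b\<bar>"
        using abs_tinner_le[OF f a] abs_tinner_le[OF f b] tangent_fst_nonneg[OF a] tangent_fst_nonneg[OF b]
        unfolding tinner_def by auto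
      moreover have "\<bar>fst a - fst b\<bar> \<le> tdist x a b"
      proof -
        have "tinner x a b = 0" using True unfolding tinner_def by auto
        then have "(tdist x a b)\<^sup>2 = (fst a - fst b)\<^sup>2" using td True by (auto simp: power2_eq_square)
        then show ?thesis using td(2) by (metis abs_of_nonneg order.refl real_sqrt_abs real_sqrt_unique)
      qed
      ultimately show ?thesis using f0 by (meson mult_left_mono order_trans)
    next
      case False
      have sf: "dir_cauchy x (snd f)" using tangent_dir_cauchy[OF f] fnz by simp
      have sa: "dir_cauchy x (snd a)" using tangent_dir_cauchy[OF a] False by simp
      have sb: "dir_cauchy x (snd b)" using tangent_dir_cauchy[OF b] False by simp
      define \<alpha> where "\<alpha> = dir_angle x (snd f) (snd a)"
      define \<beta> where "\<beta> = dir_angle x (snd f) (snd b)"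
      define \<gamma> where "\<gamma> = dir_angle x (snd a) (snd b)"
      have t1: "\<alpha> \<le> \<beta> + \<gamma>" unfolding \<alpha>_def \<beta>_def \<gamma>_def
        using dir_angle_triangle[OF H sf sb sa] dir_angle_commute[OF H sa sb] by simp
      have t2: "\<beta> \<le> \<alpha> + \<gamma>" unfolding \<alpha>_def \<beta>_def \<gamma>_def
        using dir_angle_triangle[OF H sf sa sb] by simp
      have g: "\<gamma> \<le> pi" unfolding \<gamma>_def using dir_angle_bounds[OF H sa sb] by simp
      have "(fst a * cos \<alpha> - fst b * cos \<beta>)\<^sup>2 \<le> (fst a)\<^sup>2 + (fst b)\<^sup>2 - 2 * fst a * fst b * cos \<gamma>"
        using tangent_fst_nonneg[OF a] tangent_fst_nonneg[OF b] t1 t2 g by (intro cos_diff_sq_le) auto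
      also have "\<dots> = (tdist x a b)\<^sup>2" using td unfolding tinner_def \<gamma>_def by simp
      finally have "\<bar>fst a * cos \<alpha> - fst b * cos \<beta>\<bar> \<le> tdist x a b"
        using td(2) by (metis abs_of_nonneg real_sqrt_abs real_sqrt_le_mono)
      then have "fst f * \<bar>fst a * cos \<alpha> - fst b * cos \<beta>\<bar> \<le> fst f * tdist x a b"
        using f0 by (intro mult_left_mono) auto
      moreover have "tinner x f a - tinner x f b = fst f * (fst a * cos \<alpha> - fst b * cos \<beta>)"
        unfolding tinner_def \<alpha>_def \<beta>_def by (simp add: algebra_simps)
      then have "\<bar>tinner x f a - tinner x f b\<bar> = fst f * \<bar>fst a * cos \<alpha> - fst b * cos \<beta>\<bar>"
        using f0 by (simp add: abs_mult)
      ultimately show ?thesis by simp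
    qed
  qed
qed

lemma logm_tangent:
  fixes x a :: "'a::complete_space"
  assumes H: "hadamard TYPE('a)"
  shows "logm x a \<in> tangent x"
  unfolding tangent_def logm_def using dir_cauchy_const[OF H, of a x] by auto

lemma tzero_tangent: "tzero x \<in> tangent x"
  unfolding tangent_def tzero_def by auto

lemma tdist_tzero:
  fixes x :: "'a::metric_space"
  assumes u: "u \<in> tangent x"
  shows "tdist x (tzero x) u = fst u"
proof -
  have "tinner x (tzero x) u = 0" unfolding tinner_def tzero_def by simp
  then have "(tdist x (tzero x) u)\<^sup>2 = (fst u)\<^sup>2" using tdist_sq[OF tzero_tangent u] unfolding tzero_def by simp
  then show ?thesis by (rule power2_eq_imp_eq[OF _ tdist_sq(2)[OF tzero_tangent u] tangent_fst_nonneg[OF u]])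
qed

lemma tinner_logm_ge:
  fixes x a b :: "'a::complete_space"
  assumes H: "hadamard TYPE('a)"
  shows "2 * tinner x (logm x a) (logm x b) \<ge> (dist x a)\<^sup>2 + (dist x b)\<^sup>2 - (dist a b)\<^sup>2"
proof (cases "a = x \<or> b = x")
  case True then show ?thesis unfolding tinner_def logm_def by (auto simp: dist_commute)
next
  case False
  then have ax: "a \<noteq> x" and bx: "b \<noteq> x" by auto
  have da: "dist x a > 0" and db: "dist x b > 0" using ax bx by (auto simp: dist_commute)
  have "cos (cangle x a b) \<le> cos (alex_angle x a b)"
    using alex_angle_le_cangle[OF H ax bx] alex_angle_nonneg[OF H ax bx] cangle_bounds[OF da db]
    by (intro cos_monotone_0_pi_le) auto
  then have "dist x a * dist x b * cos (cangle x a b) \<le> dist x a * dist x b * cos (alex_angle x a b)"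
    using da db by (intro mult_left_mono) auto
  moreover have "2 * (dist x a * dist x b * cos (cangle x a b)) = (dist x a)\<^sup>2 + (dist x b)\<^sup>2 - (dist a b)\<^sup>2"
    using dist_sq_cangle[OF da db] by simp
  ultimately show ?thesis unfolding tinner_def logm_def by (simp add: dir_angle_const)
qed

lemma tdist_logm_le:
  fixes x a b :: "'a::complete_space"
  assumes H: "hadamard TYPE('a)"
  shows "tdist x (logm x a) (logm x b) \<le> dist a b"
proof -
  have "(tdist x (logm x a) (logm x b))\<^sup>2 \<le> (dist a b)\<^sup>2"
    using tdist_sq[OF logm_tangent[OF H] logm_tangent[OF H], of x a b] tinner_logm_ge[OF H, of x a b]
    unfolding logm_def by simp
  then show ?thesis by (rule power2_le_imp_le) simp
qed

lemma tscale_tangent: "u \<in> tangent x \<Longrightarrow> c > 0 \<Longrightarrow> tscale c u \<in> tangent x"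
  unfolding tangent_def tscale_def by auto

lemma tinner_tscale: "tinner x (tscale c u) w = c * tinner x u w"
  unfolding tinner_def tscale_def by simp

lemma abs_tinner_logm_le:
  fixes x :: "'a::complete_space"
  assumes H: "hadamard TYPE('a)" and u: "u \<in> tangent x"
  shows "\<bar>tinner x u (logm x y)\<bar> \<le> (fst u)\<^sup>2 + (dist y x)\<^sup>2"
proof -
  have "\<bar>tinner x u (logm x y)\<bar> \<le> fst u * dist x y"
    using abs_tinner_le[OF u logm_tangent[OF H, of x y]] by (simp add: logm_def)
  also have "\<dots> = fst u * dist y x" by (simp add: dist_commute)
  also have "\<dots> \<le> (fst u)\<^sup>2 + (dist y x)\<^sup>2"
    using sum_squares_bound[of "fst u" "dist y x"] mult_nonneg_nonneg[OF tangent_fst_nonneg[OF u] zero_le_dist[of y x]]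
    by (simp add: power2_eq_square)
  finally show ?thesis .
qed

lemma continuous_on_tinner_logm:
  fixes x :: "'a::complete_space"
  assumes H: "hadamard TYPE('a)" and u: "u \<in> tangent x"
  shows "continuous_on UNIV (\<lambda>y. tinner x u (logm x y))"
proof (rule lipschitz_on_continuous_on[where L="fst u"], rule lipschitz_onI)
  fix y y' :: 'a
  have "\<bar>tinner x u (logm x y) - tinner x u (logm x y')\<bar> \<le> fst u * tdist x (logm x y) (logm x y')"
    by (rule tinner_lipschitz[OF H u logm_tangent[OF H] logm_tangent[OF H]])
  also have "\<dots> \<le> fst u * dist y y'"
    using tangent_fst_nonneg[OF u] tdist_logm_le[OF H] by (intro mult_left_mono) auto
  finally show "dist (tinner x u (logm x y)) (tinner x u (logm x y')) \<le> fst u * dist y y'"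
    by (simp add: dist_real_def)
qed (use tangent_fst_nonneg[OF u] in auto)

section \<open>Resolvents\<close>

lemma resolvent_pt_tinner:
  fixes B :: "'a::complete_space \<Rightarrow> 'a tvec set"
  assumes H: "hadamard TYPE('a)" and Bt: "\<And>y. B y \<subseteq> tangent y" and l: "l > 0"
    and R: "is_resolvent_pt B l y z"
  shows "\<exists>v\<in>B z. \<forall>w\<in>tangent z. tinner z v w = tinner z (logm z y) w / l"
proof -
  obtain v where v: "v \<in> B z" "tdist z (tscale (1 / l) (logm z y)) v = 0"
    using R unfolding is_resolvent_pt_def tmem_def by blast
  have u: "tscale (1 / l) (logm z y) \<in> tangent z" using l by (intro tscale_tangent logm_tangent[OF H]) auto
  have vt: "v \<in> tangent z" using v Bt by auto
  show ?thesis
  proof (intro bexI[OF _ v(1)] ballI)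
    fix w assume w: "w \<in> tangent z"
    have "tinner z v w = tinner z (tscale (1 / l) (logm z y)) w"
      using tinner_cong_tdist_zero[OF H u vt w v(2)] by simp
    then show "tinner z v w = tinner z (logm z y) w / l" by (simp add: tinner_tscale)
  qed
qed

lemma resolvent_pt_dist_ineq:
  fixes B :: "'a::complete_space \<Rightarrow> 'a tvec set"
  assumes H: "hadamard TYPE('a)" and Bt: "\<And>y. B y \<subseteq> tangent y" and l: "l > 0"
    and M: "monotone_vf B"
    and R1: "is_resolvent_pt B l y1 z1" and R2: "is_resolvent_pt B l y2 z2"
  shows "2 * (dist z1 z2)\<^sup>2 \<le> (dist y1 z2)\<^sup>2 + (dist y2 z1)\<^sup>2 - (dist y1 z1)\<^sup>2 - (dist y2 z2)\<^sup>2"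
proof -
  obtain v1 where v1: "v1 \<in> B z1" "\<And>w. w\<in>tangent z1 \<Longrightarrow> tinner z1 v1 w = tinner z1 (logm z1 y1) w / l"
    using resolvent_pt_tinner[OF H Bt l R1] by blast
  obtain v2 where v2: "v2 \<in> B z2" "\<And>w. w\<in>tangent z2 \<Longrightarrow> tinner z2 v2 w = tinner z2 (logm z2 y2) w / l"
    using resolvent_pt_tinner[OF H Bt l R2] by blast
  have "tinner z1 v1 (logm z1 z2) \<le> - tinner z2 v2 (logm z2 z1)"
    using M v1(1) v2(1) unfolding monotone_vf_def by blast
  then have "tinner z1 (logm z1 y1) (logm z1 z2) / l + tinner z2 (logm z2 y2) (logm z2 z1) / l \<le> 0"
    using v1(2)[OF logm_tangent[OF H]] v2(2)[OF logm_tangent[OF H]] by simp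
  then have S: "tinner z1 (logm z1 y1) (logm z1 z2) + tinner z2 (logm z2 y2) (logm z2 z1) \<le> 0"
    using l by (simp add: add_divide_distrib[symmetric] divide_le_0_iff)
  have Q1: "2 * tinner z1 (logm z1 y1) (logm z1 z2) \<ge> (dist z1 y1)\<^sup>2 + (dist z1 z2)\<^sup>2 - (dist y1 z2)\<^sup>2"
    by (rule tinner_logm_ge[OF H])
  have Q2: "2 * tinner z2 (logm z2 y2) (logm z2 z1) \<ge> (dist z2 y2)\<^sup>2 + (dist z2 z1)\<^sup>2 - (dist y2 z1)\<^sup>2"
    by (rule tinner_logm_ge[OF H])
  show ?thesis using S Q1 Q2 by (simp add: dist_commute)
qed

lemma resolvent_pt_unique:
  fixes B :: "'a::complete_space \<Rightarrow> 'a tvec set"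
  assumes H: "hadamard TYPE('a)" and Bt: "\<And>y. B y \<subseteq> tangent y" and l: "l > 0"
    and M: "monotone_vf B"
    and R1: "is_resolvent_pt B l y z1" and R2: "is_resolvent_pt B l y z2"
  shows "z1 = z2"
  using resolvent_pt_dist_ineq[OF H Bt l M R1 R2] by simp

lemma is_resolvent_pt_resolvent:
  fixes B :: "'a::complete_space \<Rightarrow> 'a tvec set"
  assumes H: "hadamard TYPE('a)" and Bt: "\<And>y. B y \<subseteq> tangent y" and l: "l > 0"
    and M: "monotone_vf B" and S: "surjectivity_cond B"
  shows "is_resolvent_pt B l y (resolvent B l y)"
proof -
  obtain z where z: "is_resolvent_pt B l y z" using S l unfolding surjectivity_cond_def by blast
  show ?thesis unfolding resolvent_def
    by (rule theI[of _ z]) (use z resolvent_pt_unique[OF H Bt l M] in blast)+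
qed

lemma dist_resolvent_sq_le:
  fixes B :: "'a::complete_space \<Rightarrow> 'a tvec set"
  assumes H: "hadamard TYPE('a)" and Bt: "\<And>y. B y \<subseteq> tangent y" and l: "l > 0"
    and M: "monotone_vf B" and S: "surjectivity_cond B"
  shows "(dist (resolvent B l y1) (resolvent B l y2))\<^sup>2
          \<le> 5 * (dist y1 y2)\<^sup>2 + 4 * dist y1 (resolvent B l y1) * dist y1 y2"
proof -
  define z1 where "z1 = resolvent B l y1"
  define z2 where "z2 = resolvent B l y2"
  define D where "D = dist z1 z2"
  define \<delta> where "\<delta> = dist y1 y2"
  define a where "a = dist y1 z1"
  define b where "b = dist y2 z2"
  have M2: "2 * D\<^sup>2 \<le> (dist y1 z2)\<^sup>2 + (dist y2 z1)\<^sup>2 - a\<^sup>2 - b\<^sup>2"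
    unfolding D_def a_def b_def z1_def z2_def
    by (rule resolvent_pt_dist_ineq[OF H Bt l M is_resolvent_pt_resolvent[OF H Bt l M S] is_resolvent_pt_resolvent[OF H Bt l M S]])
  have nn: "D \<ge> 0" "\<delta> \<ge> 0" "a \<ge> 0" "b \<ge> 0" unfolding D_def \<delta>_def a_def b_def by auto
  have t1: "dist y1 z2 \<le> \<delta> + b" unfolding \<delta>_def b_def by (rule dist_triangle)
  have t2: "dist y2 z1 \<le> \<delta> + a" unfolding \<delta>_def a_def using dist_triangle[of y2 z1 y1] by (simp add: dist_commute)
  have t3: "b \<le> \<delta> + a + D" unfolding \<delta>_def a_def b_def D_def
    using dist_triangle[of y2 z2 y1] dist_triangle[of y1 z2 z1] by (simp add: dist_commute)
  have s1: "(dist y1 z2)\<^sup>2 \<le> (\<delta> + b)\<^sup>2" using t1 by (intro power_mono) auto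
  have s2: "(dist y2 z1)\<^sup>2 \<le> (\<delta> + a)\<^sup>2" using t2 by (intro power_mono) auto
  have "2 * D\<^sup>2 \<le> 2 * \<delta>\<^sup>2 + 2 * \<delta> * (a + b)"
    using M2 s1 s2 by (simp add: power2_sum algebra_simps)
  also have "\<dots> \<le> 2 * \<delta>\<^sup>2 + 2 * \<delta> * (2 * a + \<delta> + D)"
    using t3 nn by (intro add_left_mono mult_left_mono) auto
  finally have A0: "2 * D\<^sup>2 \<le> 2 * \<delta>\<^sup>2 + 2 * \<delta> * (2 * a + \<delta> + D)" .
  have "2 * \<delta> * (2 * a + \<delta> + D) = 4 * (\<delta> * a) + 2 * \<delta>\<^sup>2 + 2 * (\<delta> * D)"
    by (simp add: algebra_simps power2_eq_square)
  then have A: "D\<^sup>2 \<le> 2 * \<delta>\<^sup>2 + 2 * (\<delta> * a) + \<delta> * D" using A0 by linarith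
  have "2 * (\<delta> * D) \<le> \<delta>\<^sup>2 + D\<^sup>2" using sum_squares_bound[of \<delta> D] by (simp add: power2_eq_square)
  then have "D\<^sup>2 \<le> 5 * \<delta>\<^sup>2 + 4 * (\<delta> * a)" using A by linarith
  then have "D\<^sup>2 \<le> 5 * \<delta>\<^sup>2 + 4 * a * \<delta>" by (simp add: algebra_simps)
  then show ?thesis unfolding D_def \<delta>_def a_def z1_def z2_def by (simp add: mult.commute mult.left_commute)
qed

lemma continuous_on_resolvent:
  fixes B :: "'a::complete_space \<Rightarrow> 'a tvec set"
  assumes H: "hadamard TYPE('a)" and Bt: "\<And>y. B y \<subseteq> tangent y" and l: "l > 0"
    and M: "monotone_vf B" and S: "surjectivity_cond B"
  shows "continuous_on UNIV (resolvent B l)"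
proof -
  have "isCont (resolvent B l) y1" for y1
  proof (rule continuous_at_eps_delta[THEN iffD2], intro allI impI)
    fix e :: real assume e: "e > 0"
    define a where "a = dist y1 (resolvent B l y1)"
    have a: "a \<ge> 0" unfolding a_def by simp
    define d where "d = min 1 (e\<^sup>2 / (5 + 4 * a + 1))"
    have d: "d > 0" unfolding d_def using e a by simp
    show "\<exists>d>0. \<forall>y. dist y y1 < d \<longrightarrow> dist (resolvent B l y) (resolvent B l y1) < e"
    proof (intro exI[of _ d] conjI allI impI d)
      fix y assume y: "dist y y1 < d"
      define \<delta> where "\<delta> = dist y1 y"
      have \<delta>: "0 \<le> \<delta>" "\<delta> < 1" "\<delta> < e\<^sup>2 / (5 + 4 * a + 1)"
        using y unfolding \<delta>_def d_def by (auto simp: dist_commute)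
      have "(dist (resolvent B l y1) (resolvent B l y))\<^sup>2 \<le> 5 * \<delta>\<^sup>2 + 4 * a * \<delta>"
        using dist_resolvent_sq_le[OF H Bt l M S, of y1 y] unfolding a_def \<delta>_def by simp
      also have "\<dots> \<le> (5 + 4 * a) * \<delta>"
      proof -
        have "\<delta> * \<delta> \<le> 1 * \<delta>" using \<delta> by (intro mult_right_mono) auto
        then have "\<delta>\<^sup>2 \<le> \<delta>" by (simp add: power2_eq_square)
        then show ?thesis by (simp add: algebra_simps)
      qed
      also have "\<dots> \<le> (5 + 4 * a + 1) * \<delta>" using \<delta> by (simp add: mult_right_mono)
      also have "\<dots> < e\<^sup>2" using \<delta> a by (simp add: less_divide_eq mult.commute)
      finally have "(dist (resolvent B l y) (resolvent B l y1))\<^sup>2 < e\<^sup>2" by (simp add: dist_commute)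
      then show "dist (resolvent B l y) (resolvent B l y1) < e"
        using e by (simp add: power2_less_imp_less)
    qed
  qed
  then show ?thesis by (simp add: continuous_at_imp_continuous_on)
qed

lemma tnorm_yosida: "tnorm (yosida B l y) = dist (resolvent B l y) y / l"
  unfolding yosida_def tnorm_def tscale_def logm_def by simp

lemma weighted_amgm:
  fixes l f d \<beta> :: real
  assumes "\<beta> > 0"
  shows "2 * l * f * d \<le> 2 * \<beta> * d\<^sup>2 + l\<^sup>2 * f\<^sup>2 / (2 * \<beta>)"
proof -
  have "0 \<le> (2 * \<beta> * d - l * f)\<^sup>2 / (2 * \<beta>)" using assms by simp
  also have "(2 * \<beta> * d - l * f)\<^sup>2 / (2 * \<beta>) = 2 * \<beta> * d\<^sup>2 + l\<^sup>2 * f\<^sup>2 / (2 * \<beta>) - 2 * l * f * d"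
    using assms by (simp add: power2_eq_square field_simps)
  finally show ?thesis by simp
qed

lemma resolvent_step_ineq:
  fixes B :: "'a::complete_space \<Rightarrow> 'a tvec set"
  assumes H: "hadamard TYPE('a)" and Bt: "\<And>y. B y \<subseteq> tangent y" and l: "l > 0"
    and M: "monotone_vf B" and S: "surjectivity_cond B"
    and \<phi>t: "\<phi> \<in> tangent xs" and \<phi>m: "tmem xs \<phi> (B xs)" and \<beta>: "\<beta> > 0"
  shows "(dist (resolvent B l y) xs)\<^sup>2 + l\<^sup>2 * (1 - 2 * \<beta>) * (tnorm (yosida B l y))\<^sup>2
     \<le> (dist y xs)\<^sup>2 - 2 * l * tinner xs \<phi> (logm xs y) + l\<^sup>2 * (fst \<phi>)\<^sup>2 / (2 * \<beta>)"
proof -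
  define z where "z = resolvent B l y"
  have R: "is_resolvent_pt B l y z" unfolding z_def by (rule is_resolvent_pt_resolvent[OF H Bt l M S])
  obtain v where v: "v \<in> B z" "\<And>w. w\<in>tangent z \<Longrightarrow> tinner z v w = tinner z (logm z y) w / l"
    using resolvent_pt_tinner[OF H Bt l R] by blast
  obtain w where w: "w \<in> B xs" "tdist xs \<phi> w = 0" using \<phi>m unfolding tmem_def by blast
  have wt: "w \<in> tangent xs" using w Bt by auto
  have "tinner z v (logm z xs) \<le> - tinner xs w (logm xs z)"
    using M v(1) w(1) unfolding monotone_vf_def by blast
  also have "tinner xs w (logm xs z) = tinner xs \<phi> (logm xs z)"
    using tinner_cong_tdist_zero[OF H \<phi>t wt logm_tangent[OF H] w(2)] by simp
  finally have I: "tinner z (logm z y) (logm z xs) / l \<le> - tinner xs \<phi> (logm xs z)"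
    using v(2)[OF logm_tangent[OF H]] by simp
  then have I2: "tinner z (logm z y) (logm z xs) \<le> - l * tinner xs \<phi> (logm xs z)"
    using l by (simp add: divide_le_eq mult.commute)
  have Q: "2 * tinner z (logm z y) (logm z xs) \<ge> (dist z y)\<^sup>2 + (dist z xs)\<^sup>2 - (dist y xs)\<^sup>2"
    by (rule tinner_logm_ge[OF H])
  have Lp: "\<bar>tinner xs \<phi> (logm xs z) - tinner xs \<phi> (logm xs y)\<bar> \<le> fst \<phi> * tdist xs (logm xs z) (logm xs y)"
    by (rule tinner_lipschitz[OF H \<phi>t logm_tangent[OF H] logm_tangent[OF H]])
  have "fst \<phi> * tdist xs (logm xs z) (logm xs y) \<le> fst \<phi> * dist z y"
    using tangent_fst_nonneg[OF \<phi>t] tdist_logm_le[OF H] by (intro mult_left_mono) auto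
  then have L2: "- tinner xs \<phi> (logm xs z) \<le> - tinner xs \<phi> (logm xs y) + fst \<phi> * dist z y"
    using Lp by linarith
  have "l * (- tinner xs \<phi> (logm xs z)) \<le> l * (- tinner xs \<phi> (logm xs y) + fst \<phi> * dist z y)"
    using L2 l by (intro mult_left_mono) auto
  then have main: "(dist z y)\<^sup>2 + (dist z xs)\<^sup>2 - (dist y xs)\<^sup>2
      \<le> - 2 * l * tinner xs \<phi> (logm xs y) + 2 * l * fst \<phi> * dist z y"
    using Q I2 by (simp add: algebra_simps)
  have am: "2 * l * fst \<phi> * dist z y \<le> 2 * \<beta> * (dist z y)\<^sup>2 + l\<^sup>2 * (fst \<phi>)\<^sup>2 / (2 * \<beta>)"
    by (rule weighted_amgm[OF \<beta>])
  have yn: "l\<^sup>2 * (tnorm (yosida B l y))\<^sup>2 = (dist z y)\<^sup>2"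
    using l unfolding tnorm_yosida z_def by (simp add: power_divide)
  have "l\<^sup>2 * (1 - 2 * \<beta>) * (tnorm (yosida B l y))\<^sup>2 = (1 - 2 * \<beta>) * (dist z y)\<^sup>2"
    using yn by (simp add: algebra_simps)
  then show ?thesis unfolding z_def[symmetric] using main am by (simp add: algebra_simps)
qed

lemma selection_resolvent_step_ineq:
  fixes A :: "'e \<Rightarrow> 'a::complete_space \<Rightarrow> 'a tvec set"
  assumes H: "hadamard TYPE('a)"
    and A_tangent: "\<forall>s\<in>space \<mu>. \<forall>x. A s x \<subseteq> tangent x"
    and A_mono: "\<forall>s\<in>space \<mu>. monotone_vf (A s)"
    and A_surj: "\<forall>s\<in>space \<mu>. surjectivity_cond (A s)"
    and \<phi>: "\<phi> \<in> selections p \<mu> A xs" and s: "s \<in> space \<mu>" and l: "0 < l" and \<beta>: "0 < \<beta>"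
  shows "(dist (resolvent (A s) l y) xs)\<^sup>2 + l\<^sup>2 * (1 - 2 * \<beta>) * (tnorm (yosida (A s) l y))\<^sup>2
      \<le> (dist y xs)\<^sup>2 - 2 * l * tinner xs (\<phi> s) (logm xs y) + l\<^sup>2 / (2 * \<beta>) * (tnorm (\<phi> s))\<^sup>2"
    and "\<bar>tinner xs (\<phi> s) (logm xs y)\<bar> \<le> (tnorm (\<phi> s))\<^sup>2 + (dist y xs)\<^sup>2"
proof -
  have \<phi>s: "\<phi> s \<in> tangent xs" "tmem xs (\<phi> s) (A s xs)"
    using \<phi> s unfolding selections_def tmeasurable_def by auto
  have "(dist (resolvent (A s) l y) xs)\<^sup>2 + l\<^sup>2 * (1 - 2 * \<beta>) * (tnorm (yosida (A s) l y))\<^sup>2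
      \<le> (dist y xs)\<^sup>2 - 2 * l * tinner xs (\<phi> s) (logm xs y) + l\<^sup>2 * (fst (\<phi> s))\<^sup>2 / (2 * \<beta>)"
    by (rule resolvent_step_ineq[where B="A s", OF H _ l _ _ \<phi>s \<beta>]) (use s A_tangent A_mono A_surj in auto)
  then show "(dist (resolvent (A s) l y) xs)\<^sup>2 + l\<^sup>2 * (1 - 2 * \<beta>) * (tnorm (yosida (A s) l y))\<^sup>2
      \<le> (dist y xs)\<^sup>2 - 2 * l * tinner xs (\<phi> s) (logm xs y) + l\<^sup>2 / (2 * \<beta>) * (tnorm (\<phi> s))\<^sup>2"
    by (simp add: tnorm_def)
  show "\<bar>tinner xs (\<phi> s) (logm xs y)\<bar> \<le> (tnorm (\<phi> s))\<^sup>2 + (dist y xs)\<^sup>2"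
    using abs_tinner_logm_le[OF H \<phi>s(1)] by (simp add: tnorm_def)
qed

section \<open>Measurability of the iteration\<close>

text \<open>Replacing \<open>Y \<omega>\<close> by the first point of a countable dense set within distance \<open>1/(k+1)\<close>
 gives countably-valued, hence measurable, approximations converging by continuity of \<open>h s\<close>.\<close>
lemma measurable_Caratheodory_compose:
  fixes h :: "'e \<Rightarrow> 'a::polish_space \<Rightarrow> 'b::metric_space"
  assumes hc: "\<And>s. s \<in> space N \<Longrightarrow> continuous_on UNIV (h s)"
    and hm: "\<And>y. (\<lambda>s. h s y) \<in> borel_measurable N"
    and f: "f \<in> measurable M N" and Y: "Y \<in> borel_measurable M"
  shows "(\<lambda>\<omega>. h (f \<omega>) (Y \<omega>)) \<in> borel_measurable M"
proof -
  obtain D :: "'a set" where D: "countable D" "D \<noteq> {}" "\<And>U. open U \<Longrightarrow> U \<noteq> {} \<Longrightarrow> \<exists>y\<in>D. y \<in> U"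
    using countable_dense_exists by blast
  define e where "e = from_nat_into D"
  have ex: "\<exists>j. dist (e j) y < r" if "r > 0" for y :: 'a and r :: real
  proof -
    have "ball y r \<noteq> {}" using that by simp
    then obtain d where "d \<in> D" "d \<in> ball y r" using D(3)[of "ball y r"] by blast
    then show ?thesis unfolding e_def using from_nat_into_surj[OF D(1)]
      by (metis dist_commute mem_ball)
  qed
  define Nk where "Nk = (\<lambda>k \<omega>. LEAST j. dist (e j) (Y \<omega>) < 1 / Suc k)"
  have Nk_prop: "dist (e (Nk k \<omega>)) (Y \<omega>) < 1 / Suc k" for k \<omega>
    unfolding Nk_def by (rule LeastI_ex) (rule ex, simp)
  have Nk_meas: "Nk k \<in> measurable M (count_space UNIV)" for k
    unfolding Nk_def by measurable (use Y in measurable)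
  have gk: "(\<lambda>\<omega>. h (f \<omega>) (e (Nk k \<omega>))) \<in> borel_measurable M" for k
  proof (rule measurable_compose_countable'[where I=UNIV and g="Nk k" and f="\<lambda>i \<omega>. h (f \<omega>) (e i)"])
    fix i :: nat
    show "(\<lambda>\<omega>. h (f \<omega>) (e i)) \<in> borel_measurable M"
      using measurable_compose[OF f hm[of "e i"]] by simp
  qed (use Nk_meas in auto)
  show ?thesis
  proof (rule borel_measurable_LIMSEQ_metric[OF gk])
    fix \<omega> assume \<omega>: "\<omega> \<in> space M"
    have "(\<lambda>k. e (Nk k \<omega>)) \<longlonglongrightarrow> Y \<omega>"
    proof (rule tendsto_sandwich[THEN tendsto_dist_iff[THEN iffD2]])
      show "\<forall>\<^sub>F k in sequentially. 0 \<le> dist (e (Nk k \<omega>)) (Y \<omega>)" by simp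
      show "\<forall>\<^sub>F k in sequentially. dist (e (Nk k \<omega>)) (Y \<omega>) \<le> 1 / Suc k"
        using Nk_prop less_imp_le by (intro always_eventually allI) blast
      show "(\<lambda>k. 0::real) \<longlonglongrightarrow> 0" by simp
      show "(\<lambda>k. 1 / real (Suc k)) \<longlonglongrightarrow> 0" by (rule LIMSEQ_inverse_real_of_nat[unfolded inverse_eq_divide])
    qed
    moreover have "isCont (h (f \<omega>)) (Y \<omega>)"
      using hc[of "f \<omega>"] f \<omega> by (simp add: continuous_on_eq_continuous_at measurable_space)
    ultimately show "(\<lambda>k. h (f \<omega>) (e (Nk k \<omega>))) \<longlonglongrightarrow> h (f \<omega>) (Y \<omega>)"
      by (rule isCont_tendsto_compose[rotated])
  qed
qed

lemma filtr_space: "space (filtr P \<mu> \<xi> k) = space P"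
  unfolding filtr_def by (simp add: space_measure_of_conv)

lemma filtr_sets: "sets (filtr P \<mu> \<xi> k) = sigma_sets (space P) {\<xi> i -` B \<inter> space P | i B. i \<in> {1..k} \<and> B \<in> sets \<mu>}"
  unfolding filtr_def by (rule sets_measure_of) auto

lemma subalgebra_filtr:
  assumes xi: "\<forall>j. \<xi> (Suc j) \<in> measurable P \<mu>"
  shows "subalgebra P (filtr P \<mu> \<xi> k)"
proof -
  have "{\<xi> i -` B \<inter> space P | i B. i \<in> {1..k} \<and> B \<in> sets \<mu>} \<subseteq> sets P"
  proof
    fix X assume "X \<in> {\<xi> i -` B \<inter> space P | i B. i \<in> {1..k} \<and> B \<in> sets \<mu>}"
    then obtain i B where X: "X = \<xi> i -` B \<inter> space P" "i \<in> {1..k}" "B \<in> sets \<mu>" by blast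
    then obtain j where "i = Suc j" by (cases i) auto
    then have "\<xi> i \<in> measurable P \<mu>" using xi by simp
    then show "X \<in> sets P" using X by (simp add: measurable_sets)
  qed
  then have "sets (filtr P \<mu> \<xi> k) \<subseteq> sets P" unfolding filtr_sets by (rule sets.sigma_sets_subset)
  then show ?thesis unfolding subalgebra_def filtr_space by simp
qed

lemma measurable_xi_filtr:
  assumes xi: "\<forall>j. \<xi> (Suc j) \<in> measurable P \<mu>" and i: "1 \<le> i" "i \<le> k"
  shows "\<xi> i \<in> measurable (filtr P \<mu> \<xi> k) \<mu>"
proof (rule measurableI)
  obtain j where "i = Suc j" using i by (cases i) auto
  then have m: "\<xi> i \<in> measurable P \<mu>" using xi by simp
  fix \<omega> assume "\<omega> \<in> space (filtr P \<mu> \<xi> k)"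
  then show "\<xi> i \<omega> \<in> space \<mu>" using m unfolding filtr_space by (simp add: measurable_space)
next
  fix B assume "B \<in> sets \<mu>"
  then show "\<xi> i -` B \<inter> space (filtr P \<mu> \<xi> k) \<in> sets (filtr P \<mu> \<xi> k)"
    unfolding filtr_sets filtr_space using i by (intro sigma_sets.Basic) auto
qed

lemma spp_iter_measurable:
  fixes A :: "'e \<Rightarrow> 'a::polish_space \<Rightarrow> 'a tvec set"
  assumes H: "hadamard TYPE('a)"
    and A_tangent: "\<forall>s\<in>space \<mu>. \<forall>x. A s x \<subseteq> tangent x"
    and A_mono: "\<forall>s\<in>space \<mu>. monotone_vf (A s)"
    and A_meas: "\<forall>x. \<forall>l>0. (\<lambda>s. resolvent (A s) l x) \<in> measurable \<mu> borel"
    and A_surj: "\<forall>s\<in>space \<mu>. surjectivity_cond (A s)"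
    and lam_pos: "\<forall>k. lam k > 0"
    and xi: "\<forall>j. \<xi> (Suc j) \<in> measurable P \<mu>"
  shows "j \<le> k \<Longrightarrow> spp_iter A x0 lam \<xi> j \<in> borel_measurable (filtr P \<mu> \<xi> k)"
proof (induction j)
  case 0 then show ?case by simp
next
  case (Suc j)
  have "(\<lambda>\<omega>. resolvent (A (\<xi> (Suc j) \<omega>)) (lam j) (spp_iter A x0 lam \<xi> j \<omega>)) \<in> borel_measurable (filtr P \<mu> \<xi> k)"
  proof (rule measurable_Caratheodory_compose[where h="\<lambda>s y. resolvent (A s) (lam j) y" and N=\<mu>])
    fix s assume s: "s \<in> space \<mu>"
    show "continuous_on UNIV (resolvent (A s) (lam j))"
      using s A_tangent A_mono A_surj lam_pos by (intro continuous_on_resolvent[OF H]) auto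
  next
    fix y show "(\<lambda>s. resolvent (A s) (lam j) y) \<in> borel_measurable \<mu>" using A_meas lam_pos by auto
  next
    show "\<xi> (Suc j) \<in> measurable (filtr P \<mu> \<xi> k) \<mu>" using Suc.prems by (intro measurable_xi_filtr[OF xi]) auto
  next
    show "spp_iter A x0 lam \<xi> j \<in> borel_measurable (filtr P \<mu> \<xi> k)" using Suc by simp
  qed
  then show ?case by simp
qed

lemma tmeasurable_fst:
  fixes \<phi> :: "'e \<Rightarrow> 'a::metric_space tvec"
  assumes "tmeasurable \<mu> x \<phi>"
  shows "(\<lambda>s. fst (\<phi> s)) \<in> borel_measurable \<mu>"
proof -
  have pt: "\<And>s. s \<in> space \<mu> \<Longrightarrow> \<phi> s \<in> tangent x" using assms unfolding tmeasurable_def by auto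
  have "(\<lambda>s. tdist x (tzero x) (\<phi> s)) \<in> borel_measurable \<mu>"
    using assms tzero_tangent unfolding tmeasurable_def by blast
  then show ?thesis
    by (subst measurable_cong[where g="\<lambda>s. tdist x (tzero x) (\<phi> s)"]) (auto simp: tdist_tzero pt)
qed

text \<open>Polarisation: the inner product with \<open>log_x y\<close> is determined by the distances
 of the tangent vector to \<open>0_x\<close> and to \<open>log_x y\<close>, which are measurable by definition.\<close>
lemma tmeasurable_tinner_logm:
  fixes \<phi> :: "'e \<Rightarrow> 'a::complete_space tvec"
  assumes H: "hadamard TYPE('a)" and tm: "tmeasurable \<mu> x \<phi>"
  shows "(\<lambda>s. tinner x (\<phi> s) (logm x y)) \<in> borel_measurable \<mu>"
proof -
  have pt: "\<And>s. s \<in> space \<mu> \<Longrightarrow> \<phi> s \<in> tangent x" using tm unfolding tmeasurable_def by auto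
  have [measurable]: "(\<lambda>s. tdist x (tzero x) (\<phi> s)) \<in> borel_measurable \<mu>"
      "(\<lambda>s. tdist x (logm x y) (\<phi> s)) \<in> borel_measurable \<mu>"
    using tm tzero_tangent logm_tangent[OF H] unfolding tmeasurable_def by blast+
  have eq: "tinner x (\<phi> s) (logm x y)
      = ((dist x y)\<^sup>2 + (tdist x (tzero x) (\<phi> s))\<^sup>2 - (tdist x (logm x y) (\<phi> s))\<^sup>2) / 2"
    if s: "s \<in> space \<mu>" for s
  proof -
    have "(tdist x (logm x y) (\<phi> s))\<^sup>2 = (dist x y)\<^sup>2 + (fst (\<phi> s))\<^sup>2 - 2 * tinner x (logm x y) (\<phi> s)"
      using tdist_sq(1)[OF logm_tangent[OF H] pt[OF s]] unfolding logm_def by simp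
    moreover have "tinner x (logm x y) (\<phi> s) = tinner x (\<phi> s) (logm x y)"
      by (rule tinner_commute[OF H logm_tangent[OF H] pt[OF s]])
    ultimately show ?thesis using tdist_tzero[OF pt[OF s]] by simp
  qed
  show ?thesis by (subst measurable_cong[OF eq]) (assumption, measurable)
qed

lemma borel_measurable_tinner_logm_compose:
  fixes \<phi> :: "'e \<Rightarrow> 'a::polish_space tvec"
  assumes H: "hadamard TYPE('a)" and tm: "tmeasurable \<mu> x \<phi>"
    and \<xi>: "\<xi> \<in> measurable M \<mu>" and X: "X \<in> borel_measurable M"
  shows "(\<lambda>\<omega>. tinner x (\<phi> (\<xi> \<omega>)) (logm x (X \<omega>))) \<in> borel_measurable M"
proof (rule measurable_Caratheodory_compose[where h="\<lambda>s y. tinner x (\<phi> s) (logm x y)", OF _ _ \<xi> X])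
  fix s assume "s \<in> space \<mu>"
  then show "continuous_on UNIV (\<lambda>y. tinner x (\<phi> s) (logm x y))"
    using tm unfolding tmeasurable_def by (intro continuous_on_tinner_logm[OF H]) auto
qed (rule tmeasurable_tinner_logm[OF H tm])

section \<open>Independence of the next sample\<close>

lemma filtr_sets_Suc:
  "sets (filtr P \<mu> \<xi> n) = sigma_sets (space P) (\<Union>i\<in>{..<n}. {\<xi> (Suc i) -` B \<inter> space P | B. B \<in> sets \<mu>})"
proof -
  have "{\<xi> i -` B \<inter> space P | i B. i \<in> {1..n} \<and> B \<in> sets \<mu>}
      = (\<Union>i\<in>{..<n}. {\<xi> (Suc i) -` B \<inter> space P | B. B \<in> sets \<mu>})"
  proof (intro equalityI subsetI)
    fix X assume "X \<in> {\<xi> i -` B \<inter> space P | i B. i \<in> {1..n} \<and> B \<in> sets \<mu>}"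
    then obtain i B where X: "X = \<xi> i -` B \<inter> space P" "i \<in> {1..n}" "B \<in> sets \<mu>" by blast
    then obtain j where "i = Suc j" by (cases i) auto
    with X have "j \<in> {..<n}" "X \<in> {\<xi> (Suc j) -` B \<inter> space P | B. B \<in> sets \<mu>}" by auto
    then show "X \<in> (\<Union>i\<in>{..<n}. {\<xi> (Suc i) -` B \<inter> space P | B. B \<in> sets \<mu>})" by blast
  next
    fix X assume "X \<in> (\<Union>i\<in>{..<n}. {\<xi> (Suc i) -` B \<inter> space P | B. B \<in> sets \<mu>})"
    then obtain j B where "X = \<xi> (Suc j) -` B \<inter> space P" "j < n" "B \<in> sets \<mu>" by auto
    then show "X \<in> {\<xi> i -` B \<inter> space P | i B. i \<in> {1..n} \<and> B \<in> sets \<mu>}"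
      by (intro CollectI exI[of _ "Suc j"] exI[of _ B]) auto
  qed
  then show ?thesis unfolding filtr_sets by simp
qed

lemma indep_filtr_xi:
  fixes P :: "'w measure" and \<mu> :: "'e measure"
  assumes probO: "prob_space P" and xi: "\<forall>k. \<xi> (Suc k) \<in> measurable P \<mu>"
    and ind: "prob_space.indep_vars P (\<lambda>_. \<mu>) (\<lambda>k. \<xi> (Suc k)) UNIV"
    and A: "A \<in> sets (filtr P \<mu> \<xi> n)" and B: "B \<in> sets \<mu>"
  shows "emeasure P (A \<inter> (\<xi> (Suc n) -` B \<inter> space P)) = emeasure P A * emeasure P (\<xi> (Suc n) -` B \<inter> space P)"
proof -
  interpret prob_space P by (rule probO)
  define E where "E = (\<lambda>i. {\<xi> (Suc i) -` B \<inter> space P | B. B \<in> sets \<mu>})"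
  have indE: "indep_sets E UNIV" using ind unfolding indep_vars_def2 E_def by simp
  define I where "I = (\<lambda>b::bool. if b then {..<n} else {n})"
  have indE': "indep_sets E (\<Union>j\<in>UNIV. I j)" by (rule indep_sets_mono_index[OF _ indE]) auto
  have IS: "Int_stable (E i)" for i
  proof (rule Int_stableI)
    fix a b assume "a \<in> E i" "b \<in> E i"
    then obtain Ba Bb where "a = \<xi> (Suc i) -` Ba \<inter> space P" "Ba \<in> sets \<mu>"
      "b = \<xi> (Suc i) -` Bb \<inter> space P" "Bb \<in> sets \<mu>" unfolding E_def by blast
    then show "a \<inter> b \<in> E i" unfolding E_def by (intro CollectI exI[of _ "Ba \<inter> Bb"]) auto
  qed
  have disj: "disjoint_family_on I UNIV" unfolding disjoint_family_on_def I_def by auto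
  have ind2: "indep_sets (\<lambda>j. sigma_sets (space P) (\<Union>i\<in>I j. E i)) UNIV"
    by (rule indep_sets_collect_sigma[OF indE' IS disj])
  define C where "C = (\<lambda>b::bool. if b then A else \<xi> (Suc n) -` B \<inter> space P)"
  have CT: "C True \<in> sigma_sets (space P) (\<Union>i\<in>I True. E i)"
    using A unfolding C_def filtr_sets_Suc I_def E_def by simp
  have CF: "C False \<in> sigma_sets (space P) (\<Union>i\<in>I False. E i)"
    unfolding C_def I_def E_def using B by (intro sigma_sets.Basic) auto
  have "prob (\<Inter>j\<in>UNIV. C j) = (\<Prod>j\<in>UNIV. prob (C j))"
  proof (rule indep_setsD[OF ind2])
    show "\<forall>j\<in>UNIV. C j \<in> sigma_sets (space P) (\<Union>i\<in>I j. E i)"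
    proof
      fix j :: bool show "C j \<in> sigma_sets (space P) (\<Union>i\<in>I j. E i)" using CT CF by (cases j) auto
    qed
  qed auto
  moreover have "(\<Inter>j\<in>UNIV. C j) = A \<inter> (\<xi> (Suc n) -` B \<inter> space P)"
    unfolding C_def UNIV_bool by auto
  moreover have "(\<Prod>j\<in>UNIV. prob (C j)) = prob A * prob (\<xi> (Suc n) -` B \<inter> space P)"
    unfolding C_def by (simp add: UNIV_bool)
  ultimately show ?thesis by (simp add: emeasure_eq_measure ennreal_mult)
qed

lemma distr_density_filtr_xi:
  fixes P :: "'w measure" and \<mu> :: "'e measure"
  assumes probO: "prob_space P" and xi: "\<forall>k. \<xi> (Suc k) \<in> measurable P \<mu>"
    and ind: "prob_space.indep_vars P (\<lambda>_. \<mu>) (\<lambda>k. \<xi> (Suc k)) UNIV"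
    and dis: "distr P \<mu> (\<xi> (Suc n)) = \<mu>"
    and A: "A \<in> sets (filtr P \<mu> \<xi> n)"
  shows "distr (density P (indicator A)) \<mu> (\<xi> (Suc n)) = density \<mu> (\<lambda>_. emeasure P A)"
    (is "?Q = _")
proof (rule measure_eqI)
  have AP: "A \<in> sets P" using A subalgebra_filtr[OF xi] unfolding subalgebra_def by blast
  have xm: "\<xi> (Suc n) \<in> measurable P \<mu>" using xi by simp
  have xm': "\<xi> (Suc n) \<in> measurable (density P (indicator A)) \<mu>"
    using xm measurable_cong_sets[of "density P (indicator A)" P \<mu> \<mu>] by simp
  fix B assume "B \<in> sets ?Q"
  then have B: "B \<in> sets \<mu>" by simp
  have pre: "\<xi> (Suc n) -` B \<inter> space P \<in> sets P" by (rule measurable_sets[OF xm B])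
  have "emeasure ?Q B = emeasure (density P (indicator A)) (\<xi> (Suc n) -` B \<inter> space P)"
    using emeasure_distr[OF xm' B] by simp
  also have "\<dots> = (\<integral>\<^sup>+ x. indicator (A \<inter> (\<xi> (Suc n) -` B \<inter> space P)) x \<partial>P)"
    using emeasure_density[OF borel_measurable_indicator[OF AP] pre]
    by (simp add: indicator_inter_arith)
  also have "\<dots> = emeasure P A * emeasure P (\<xi> (Suc n) -` B \<inter> space P)"
    using indep_filtr_xi[OF probO xi ind A B] AP pre by (simp add: Int_absorb1)
  also have "emeasure P (\<xi> (Suc n) -` B \<inter> space P) = emeasure \<mu> B"
    using emeasure_distr[OF xm B] dis by simp
  also have "emeasure P A * emeasure \<mu> B = emeasure (density \<mu> (\<lambda>_. emeasure P A)) B"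
    using emeasure_density[of "\<lambda>_. emeasure P A" \<mu> B] nn_integral_cmult_indicator[OF B] B by simp
  finally show "emeasure ?Q B = emeasure (density \<mu> (\<lambda>_. emeasure P A)) B" .
qed simp

lemma nn_integral_xi_filtr:
  fixes P :: "'w measure" and \<mu> :: "'e measure" and g :: "'e \<Rightarrow> ennreal"
  assumes probO: "prob_space P" and xi: "\<forall>k. \<xi> (Suc k) \<in> measurable P \<mu>"
    and ind: "prob_space.indep_vars P (\<lambda>_. \<mu>) (\<lambda>k. \<xi> (Suc k)) UNIV"
    and dis: "distr P \<mu> (\<xi> (Suc n)) = \<mu>"
    and g: "g \<in> borel_measurable \<mu>"
    and A: "A \<in> sets (filtr P \<mu> \<xi> n)"
  shows "(\<integral>\<^sup>+\<omega>. g (\<xi> (Suc n) \<omega>) * indicator A \<omega> \<partial>P) = emeasure P A * (\<integral>\<^sup>+s. g s \<partial>\<mu>)"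
proof -
  have xm: "\<xi> (Suc n) \<in> measurable P \<mu>" using xi by simp
  have AP: "A \<in> sets P" using A subalgebra_filtr[OF xi] unfolding subalgebra_def by blast
  have xm': "\<xi> (Suc n) \<in> measurable (density P (indicator A)) \<mu>"
    using xm measurable_cong_sets[of "density P (indicator A)" P \<mu> \<mu>] by simp
  have "(\<integral>\<^sup>+\<omega>. g (\<xi> (Suc n) \<omega>) * indicator A \<omega> \<partial>P) = (\<integral>\<^sup>+\<omega>. g (\<xi> (Suc n) \<omega>) \<partial>density P (indicator A))"
    using nn_integral_density[OF borel_measurable_indicator[OF AP] measurable_compose[OF xm g]]
    by (simp add: mult.commute)
  also have "\<dots> = (\<integral>\<^sup>+s. g s \<partial>distr (density P (indicator A)) \<mu> (\<xi> (Suc n)))"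
    by (rule nn_integral_distr[symmetric, OF xm']) (simp add: g)
  also have "\<dots> = (\<integral>\<^sup>+s. emeasure P A * g s \<partial>\<mu>)"
    unfolding distr_density_filtr_xi[OF probO xi ind dis A] by (rule nn_integral_density) (simp_all add: g)
  also have "\<dots> = emeasure P A * (\<integral>\<^sup>+s. g s \<partial>\<mu>)"
    by (rule nn_integral_cmult[OF g])
  finally show ?thesis .
qed

lemma nn_cond_exp_xi:
  fixes P :: "'w measure" and \<mu> :: "'e measure" and g :: "'e \<Rightarrow> ennreal"
  assumes probO: "prob_space P" and xi: "\<forall>k. \<xi> (Suc k) \<in> measurable P \<mu>"
    and ind: "prob_space.indep_vars P (\<lambda>_. \<mu>) (\<lambda>k. \<xi> (Suc k)) UNIV"
    and dis: "distr P \<mu> (\<xi> (Suc n)) = \<mu>"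
    and g: "g \<in> borel_measurable \<mu>"
  shows "AE \<omega> in P. nn_cond_exp P (filtr P \<mu> \<xi> n) (\<lambda>\<omega>. g (\<xi> (Suc n) \<omega>)) \<omega> = (\<integral>\<^sup>+s. g s \<partial>\<mu>)"
proof -
  interpret prob_space P by (rule probO)
  interpret finite_measure_subalgebra P "filtr P \<mu> \<xi> n"
    by unfold_locales (rule subalgebra_filtr[OF xi])
  have xm: "\<xi> (Suc n) \<in> measurable P \<mu>" using xi by simp
  have "AE \<omega> in P. (\<lambda>_. (\<integral>\<^sup>+s. g s \<partial>\<mu>)) \<omega> = nn_cond_exp P (filtr P \<mu> \<xi> n) (\<lambda>\<omega>. g (\<xi> (Suc n) \<omega>)) \<omega>"
  proof (rule nn_cond_exp_charact)
    fix A assume A: "A \<in> sets (filtr P \<mu> \<xi> n)"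
    have AP: "A \<in> sets P" using A subalg unfolding subalgebra_def by auto
    show "(\<integral>\<^sup>+ x \<in> A. g (\<xi> (Suc n) x) \<partial>P) = (\<integral>\<^sup>+ x \<in> A. (\<integral>\<^sup>+s. g s \<partial>\<mu>) \<partial>P)"
    proof -
      have e1: "(\<integral>\<^sup>+ x \<in> A. g (\<xi> (Suc n) x) \<partial>P) = emeasure P A * (\<integral>\<^sup>+s. g s \<partial>\<mu>)"
        using nn_integral_xi_filtr[OF probO xi ind dis g A] by simp
      have e2: "(\<integral>\<^sup>+ x. (\<integral>\<^sup>+s. g s \<partial>\<mu>) * indicator A x \<partial>P) = (\<integral>\<^sup>+s. g s \<partial>\<mu>) * emeasure P A"
        by (rule nn_integral_cmult_indicator[OF AP])
      show ?thesis unfolding e1 using e2 by (simp add: mult.commute)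
    qed
  next
    show "(\<lambda>\<omega>. g (\<xi> (Suc n) \<omega>)) \<in> borel_measurable P" using measurable_compose[OF xm g] by simp
  qed simp
  then show ?thesis by auto
qed

lemma nn_cond_exp_xi_integral:
  fixes P :: "'w measure" and \<mu> :: "'e measure" and g :: "'e \<Rightarrow> real"
  assumes probO: "prob_space P" and xi: "\<forall>k. \<xi> (Suc k) \<in> measurable P \<mu>"
    and ind: "prob_space.indep_vars P (\<lambda>_. \<mu>) (\<lambda>k. \<xi> (Suc k)) UNIV"
    and dis: "distr P \<mu> (\<xi> (Suc n)) = \<mu>"
    and g: "integrable \<mu> g" "\<And>s. 0 \<le> g s"
  shows "AE \<omega> in P. nn_cond_exp P (filtr P \<mu> \<xi> n) (\<lambda>\<omega>. ennreal (g (\<xi> (Suc n) \<omega>))) \<omega>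
    = ennreal (\<integral>s. g s \<partial>\<mu>)"
  using nn_cond_exp_xi[OF probO xi ind dis, of "\<lambda>s. ennreal (g s)"] nn_integral_eq_integral[OF g(1)] g
  by simp

section \<open>Conditional expectations\<close>

lemma ennreal_le_sign_split:
  fixes a b r f g k L c :: real
  assumes "0 \<le> a" "0 \<le> b" "0 \<le> r" "0 \<le> f" "0 \<le> k" "0 \<le> L" "0 \<le> c"
    and "a + k * b \<le> r - L * g + c * f"
  shows "ennreal a + ennreal k * ennreal b + ennreal L * ennreal g
      \<le> ennreal r + ennreal L * ennreal (- g) + ennreal c * ennreal f"
proof -
  have "ennreal a + ennreal k * ennreal b + ennreal L * ennreal g
      = ennreal (a + k * b + L * max g 0)"
    using assms by (simp add: ennreal_plus ennreal_mult' ennreal_max_0)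
  also have "\<dots> \<le> ennreal (r + L * max (- g) 0 + c * f)"
    using assms by (intro ennreal_leI) (auto simp: max_def algebra_simps)
  also have "\<dots> = ennreal r + ennreal L * ennreal (- g) + ennreal c * ennreal f"
    using assms by (simp add: ennreal_plus ennreal_mult' ennreal_max_0)
  finally show ?thesis .
qed

context sigma_finite_subalgebra
begin

lemma nn_cond_exp_add_cmult:
  assumes [measurable]: "u \<in> borel_measurable M" "v \<in> borel_measurable M" "w \<in> borel_measurable M"
  shows "AE x in M. nn_cond_exp M F (\<lambda>x. u x + \<kappa> * v x + \<rho> * w x) x
    = nn_cond_exp M F u x + \<kappa> * nn_cond_exp M F v x + \<rho> * nn_cond_exp M F w x"
proof -
  have "AE x in M. nn_cond_exp M F (\<lambda>x. u x + \<kappa> * v x) x + nn_cond_exp M F (\<lambda>x. \<rho> * w x) x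
      = nn_cond_exp M F (\<lambda>x. u x + \<kappa> * v x + \<rho> * w x) x"
    by (rule nn_cond_exp_sum) measurable
  moreover have "AE x in M. nn_cond_exp M F u x + nn_cond_exp M F (\<lambda>x. \<kappa> * v x) x
      = nn_cond_exp M F (\<lambda>x. u x + \<kappa> * v x) x"
    by (rule nn_cond_exp_sum) measurable
  moreover have "AE x in M. \<kappa> * nn_cond_exp M F v x = nn_cond_exp M F (\<lambda>x. \<kappa> * v x) x"
    by (rule nn_cond_exp_prod) measurable
  moreover have "AE x in M. \<rho> * nn_cond_exp M F w x = nn_cond_exp M F (\<lambda>x. \<rho> * w x) x"
    by (rule nn_cond_exp_prod) measurable
  ultimately show ?thesis by eventually_elim simp
qed

text \<open>Since \<open>real_cond_exp\<close> is the difference of the conditional expectations of the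
 positive and the negative part, it vanishes exactly where these (finite) parts agree.\<close>
lemma nn_cond_exp_pos_eq_neg:
  assumes [measurable]: "G \<in> borel_measurable M" "h \<in> borel_measurable M"
    and dom: "\<And>x. x \<in> space M \<Longrightarrow> \<bar>G x\<bar> \<le> h x"
    and fin: "AE x in M. nn_cond_exp M F (\<lambda>x. ennreal (h x)) x < \<infinity>"
    and zero: "AE x in M. real_cond_exp M F G x = 0"
  shows "AE x in M. nn_cond_exp M F (\<lambda>x. ennreal (G x)) x = nn_cond_exp M F (\<lambda>x. ennreal (- G x)) x
    \<and> nn_cond_exp M F (\<lambda>x. ennreal (- G x)) x < \<infinity>"
proof -
  have le_h: "AE x in M. nn_cond_exp M F (\<lambda>x. ennreal (g x)) x \<le> nn_cond_exp M F (\<lambda>x. ennreal (h x)) x"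
    if [measurable]: "g \<in> borel_measurable M" and g: "\<And>x. x \<in> space M \<Longrightarrow> g x \<le> h x" for g
  proof (rule nn_cond_exp_mono[OF AE_I2])
    fix x assume "x \<in> space M"
    then show "ennreal (g x) \<le> ennreal (h x)" using g by (simp add: ennreal_leI)
  qed (measurable, measurable)
  have "AE x in M. nn_cond_exp M F (\<lambda>x. ennreal (G x)) x \<le> nn_cond_exp M F (\<lambda>x. ennreal (h x)) x"
    by (rule le_h) (use dom abs_le_D1 in auto)
  moreover have "AE x in M. nn_cond_exp M F (\<lambda>x. ennreal (- G x)) x \<le> nn_cond_exp M F (\<lambda>x. ennreal (h x)) x"
    by (rule le_h) (use dom abs_le_D2 in auto)
  ultimately show ?thesis using fin zero unfolding real_cond_exp_def
  proof eventually_elim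
    case (elim x)
    have fin_pos: "nn_cond_exp M F (\<lambda>x. ennreal (G x)) x < \<infinity>"
      using elim(1,3) by (rule le_less_trans)
    have fin_neg: "nn_cond_exp M F (\<lambda>x. ennreal (- G x)) x < \<infinity>"
      using elim(2,3) by (rule le_less_trans)
    have "enn2real (nn_cond_exp M F (\<lambda>x. ennreal (G x)) x) = enn2real (nn_cond_exp M F (\<lambda>x. ennreal (- G x)) x)"
      using elim(4) by simp
    then have "ennreal (enn2real (nn_cond_exp M F (\<lambda>x. ennreal (G x)) x))
        = ennreal (enn2real (nn_cond_exp M F (\<lambda>x. ennreal (- G x)) x))" by simp
    with fin_pos fin_neg show ?case by simp
  qed
qed

lemma nn_cond_exp_add_F_meas_finite:
  assumes [measurable]: "f \<in> borel_measurable M" "r \<in> borel_measurable F"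
    and nonneg: "\<And>x. x \<in> space M \<Longrightarrow> 0 \<le> f x \<and> 0 \<le> r x"
    and fin: "AE x in M. nn_cond_exp M F (\<lambda>x. ennreal (f x)) x < \<infinity>"
  shows "AE x in M. nn_cond_exp M F (\<lambda>x. ennreal (f x + r x)) x < \<infinity>"
proof -
  have [measurable]: "r \<in> borel_measurable M" by (rule measurable_from_subalg[OF subalg]) measurable
  have "AE x in M. nn_cond_exp M F (\<lambda>x. ennreal (f x + r x)) x
      = nn_cond_exp M F (\<lambda>x. ennreal (f x) + ennreal (r x)) x"
    using nonneg by (intro nn_cond_exp_cong) (auto simp: ennreal_plus)
  moreover have "AE x in M. nn_cond_exp M F (\<lambda>x. ennreal (f x)) x + nn_cond_exp M F (\<lambda>x. ennreal (r x)) x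
      = nn_cond_exp M F (\<lambda>x. ennreal (f x) + ennreal (r x)) x"
    by (rule nn_cond_exp_sum) measurable
  moreover have "AE x in M. ennreal (r x) = nn_cond_exp M F (\<lambda>x. ennreal (r x)) x"
    by (rule nn_cond_exp_F_meas) measurable
  ultimately show ?thesis using fin
  proof eventually_elim
    case (elim x)
    then have "nn_cond_exp M F (\<lambda>x. ennreal (f x + r x)) x = nn_cond_exp M F (\<lambda>x. ennreal (f x)) x + ennreal (r x)"
      by simp
    with elim(4) show ?case by (simp add: ennreal_add_less_top)
  qed
qed

text \<open>\<open>G\<close> need not be integrable: its domination by \<open>f + r\<close> keeps both parts of its conditional
 expectation finite.\<close>
lemma nn_cond_exp_le_drop_mean_zero:
  fixes a b r G f :: "'a \<Rightarrow> real" and k L c m :: real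
  assumes [measurable]: "a \<in> borel_measurable M" "b \<in> borel_measurable M" "G \<in> borel_measurable M"
      "f \<in> borel_measurable M" "r \<in> borel_measurable F"
    and nonneg: "\<And>x. x \<in> space M \<Longrightarrow> 0 \<le> a x \<and> 0 \<le> b x \<and> 0 \<le> r x \<and> 0 \<le> f x"
    and coeffs: "0 \<le> k" "0 < L" "0 \<le> c"
    and ineq: "\<And>x. x \<in> space M \<Longrightarrow> a x + k * b x \<le> r x - L * G x + c * f x"
    and dom: "\<And>x. x \<in> space M \<Longrightarrow> \<bar>G x\<bar> \<le> f x + r x"
    and mean: "AE x in M. nn_cond_exp M F (\<lambda>x. ennreal (f x)) x = ennreal m" "0 \<le> m"
    and zero: "AE x in M. real_cond_exp M F G x = 0"
  shows "AE x in M. nn_cond_exp M F (\<lambda>x. ennreal (a x)) x + ennreal k * nn_cond_exp M F (\<lambda>x. ennreal (b x)) x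
    \<le> ennreal (r x + c * m)"
proof -
  let ?E = "nn_cond_exp M F"
  have fin: "AE x in M. ?E (\<lambda>x. ennreal (f x)) x < \<infinity>" using mean(1) by eventually_elim simp
  have [measurable]: "r \<in> borel_measurable M" by (rule measurable_from_subalg[OF subalg]) measurable
  have "AE x in M. ennreal (r x) = ?E (\<lambda>x. ennreal (r x)) x"
    by (rule nn_cond_exp_F_meas) measurable
  then have r_eq: "AE x in M. ?E (\<lambda>x. ennreal (r x)) x = ennreal (r x)"
    by eventually_elim simp
  have mono: "AE x in M. ?E (\<lambda>x. ennreal (a x) + ennreal k * ennreal (b x) + ennreal L * ennreal (G x)) x
      \<le> ?E (\<lambda>x. ennreal (r x) + ennreal L * ennreal (- G x) + ennreal c * ennreal (f x)) x"
  proof (rule nn_cond_exp_mono[OF AE_I2])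
    fix x assume "x \<in> space M"
    then show "ennreal (a x) + ennreal k * ennreal (b x) + ennreal L * ennreal (G x)
        \<le> ennreal (r x) + ennreal L * ennreal (- G x) + ennreal c * ennreal (f x)"
      using nonneg[of x] ineq[of x] coeffs by (intro ennreal_le_sign_split) auto
  qed (measurable, measurable)
  have pos_neg: "AE x in M. ?E (\<lambda>x. ennreal (G x)) x = ?E (\<lambda>x. ennreal (- G x)) x
      \<and> ?E (\<lambda>x. ennreal (- G x)) x < \<infinity>"
    by (rule nn_cond_exp_pos_eq_neg[of G "\<lambda>x. f x + r x"]; (measurable)?)
      (use dom zero nn_cond_exp_add_F_meas_finite[OF _ _ _ fin] nonneg in auto)
  have lhs: "AE x in M. ?E (\<lambda>x. ennreal (a x) + ennreal k * ennreal (b x) + ennreal L * ennreal (G x)) x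
    = ?E (\<lambda>x. ennreal (a x)) x + ennreal k * ?E (\<lambda>x. ennreal (b x)) x + ennreal L * ?E (\<lambda>x. ennreal (G x)) x"
    by (rule nn_cond_exp_add_cmult) measurable
  have rhs: "AE x in M. ?E (\<lambda>x. ennreal (r x) + ennreal L * ennreal (- G x) + ennreal c * ennreal (f x)) x
    = ?E (\<lambda>x. ennreal (r x)) x + ennreal L * ?E (\<lambda>x. ennreal (- G x)) x + ennreal c * ?E (\<lambda>x. ennreal (f x)) x"
    by (rule nn_cond_exp_add_cmult) measurable
  from mono pos_neg r_eq lhs rhs mean(1) AE_space show ?thesis
  proof eventually_elim
    case (elim x)
    let ?m = "ennreal L * ?E (\<lambda>x. ennreal (- G x)) x"
    have "?m + (?E (\<lambda>x. ennreal (a x)) x + ennreal k * ?E (\<lambda>x. ennreal (b x)) x)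
        \<le> ?m + (ennreal (r x) + ennreal c * ennreal m)"
      using elim(1) unfolding elim(2)[THEN conjunct1] elim(3,4,5,6) by (simp add: ac_simps)
    moreover have "?m \<noteq> \<infinity>" using elim(2)[THEN conjunct2] by (simp add: ennreal_mult_eq_top_iff)
    moreover have "ennreal (r x) + ennreal c * ennreal m = ennreal (r x + c * m)"
      using nonneg[OF elim(7)] coeffs mean(2) by (simp add: ennreal_plus ennreal_mult')
    ultimately show ?case by (simp add: ennreal_add_left_cancel_le)
  qed
qed

end

theorem mainTheorem5:
  fixes \<mu> :: "'e measure" and P :: "'w measure"
    and A :: "'e \<Rightarrow> 'a::polish_space \<Rightarrow> 'a tvec set"
    and x0 xs :: 'a and lam :: "nat \<Rightarrow> real" and \<xi> :: "nat \<Rightarrow> 'w \<Rightarrow> 'e"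
    and \<alpha> :: "'e \<Rightarrow> real" and \<phi>s :: "'e \<Rightarrow> 'a tvec" and \<beta> :: real and n :: nat
  assumes hadamard: "hadamard TYPE('a)"
    and tsep: "\<forall>x::'a. tangent_separable x"
    and probE: "prob_space \<mu>" and probO: "prob_space P"
    and A_tangent: "\<forall>s\<in>space \<mu>. \<forall>x. A s x \<subseteq> tangent x"
    and A_mono: "\<forall>s\<in>space \<mu>. monotone_vf (A s)"
    and A_meas: "\<forall>x. \<forall>l>0. (\<lambda>s. resolvent (A s) l x) \<in> measurable \<mu> borel"
    and A_surj: "\<forall>s\<in>space \<mu>. surjectivity_cond (A s)"
    \<comment> \<open>(A0)\<close>
    and lam_pos: "\<forall>k. lam k > 0"
    and lam_sq: "summable (\<lambda>k. (lam k)\<^sup>2)"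
    and lam_div: "\<not> summable lam"
    and xi_meas: "\<forall>k. \<xi> (Suc k) \<in> measurable P \<mu>"
    and xi_indep: "prob_space.indep_vars P (\<lambda>_. \<mu>) (\<lambda>k. \<xi> (Suc k)) UNIV"
    and xi_distr: "\<forall>k. distr P \<mu> (\<xi> (Suc k)) = \<mu>"
    \<comment> \<open>(A1)\<close>
    and alpha_meas: "\<alpha> \<in> borel_measurable \<mu>"
    and alpha_range: "\<forall>s\<in>space \<mu>. 0 < \<alpha> s \<and> \<alpha> s \<le> 1"
    and alpha_int: "(\<integral>s. \<alpha> s \<partial>\<mu>) > 0"
    and A_smono: "\<forall>s\<in>space \<mu>. strongly_monotone (A s) (\<alpha> s)"
    \<comment> \<open>(A2)\<close>
    and xs_zero: "mean_field_zero \<mu> A xs"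
    and phis_sel: "\<phi>s \<in> selections 2 \<mu> A xs"
    and phis_int: "tbarycenter \<mu> xs \<phi>s (tzero xs)"
    \<comment> \<open>(A3)\<close>
    and A3: "\<forall>k. AE \<omega> in P. real_cond_exp P (filtr P \<mu> \<xi> k)
              (\<lambda>\<omega>. tinner xs (\<phi>s (\<xi> (Suc k) \<omega>)) (logm xs (spp_iter A x0 lam \<xi> k \<omega>))) \<omega> = 0"
    and beta: "0 < \<beta>" "\<beta> \<le> 1/2"
  shows "AE \<omega> in P.
     nn_cond_exp P (filtr P \<mu> \<xi> n)
        (\<lambda>\<omega>. ennreal ((dist (spp_iter A x0 lam \<xi> (Suc n) \<omega>) xs)\<^sup>2)) \<omega>
     + ennreal ((lam n)\<^sup>2 * (1 - 2 * \<beta>)) *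
       nn_cond_exp P (filtr P \<mu> \<xi> n)
        (\<lambda>\<omega>. ennreal ((tnorm (yosida (A (\<xi> (Suc n) \<omega>)) (lam n) (spp_iter A x0 lam \<xi> n \<omega>)))\<^sup>2)) \<omega>
     \<le> ennreal ((dist (spp_iter A x0 lam \<xi> n \<omega>) xs)\<^sup>2
               + (lam n)\<^sup>2 * (\<integral>s. (tnorm (\<phi>s s))\<^sup>2 \<partial>\<mu>) / (2 * \<beta>))"
proof -
  interpret P: prob_space P by (rule probO)
  interpret F: finite_measure_subalgebra P "filtr P \<mu> \<xi> n"
    by unfold_locales (rule subalgebra_filtr[OF xi_meas])
  note iter_measurable = spp_iter_measurable[OF hadamard A_tangent A_mono A_meas A_surj lam_pos xi_meas]
  define x where "x = spp_iter A x0 lam \<xi> n"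
  define x' where "x' = spp_iter A x0 lam \<xi> (Suc n)"
  define s where "s = \<xi> (Suc n)"
  define G where "G = (\<lambda>\<omega>. tinner xs (\<phi>s (s \<omega>)) (logm xs (x \<omega>)))"
  define f where "f = (\<lambda>\<omega>. (tnorm (\<phi>s (s \<omega>)))\<^sup>2)"
  have x': "\<And>\<omega>. resolvent (A (s \<omega>)) (lam n) (x \<omega>) = x' \<omega>" unfolding x_def x'_def s_def by simp
  have tm: "tmeasurable \<mu> xs \<phi>s" using phis_sel unfolding selections_def by simp
  have s[measurable]: "s \<in> measurable P \<mu>" unfolding s_def using xi_meas by simp
  have xF[measurable]: "x \<in> borel_measurable (filtr P \<mu> \<xi> n)" unfolding x_def by (rule iter_measurable) simp
  have xP[measurable]: "x \<in> borel_measurable P" by (rule measurable_from_subalg[OF F.subalg xF])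
  have [measurable]: "x' \<in> borel_measurable P" unfolding x'_def
    by (rule measurable_from_subalg[OF subalgebra_filtr[OF xi_meas, where k="Suc n"] iter_measurable]) simp
  have [measurable]: "G \<in> borel_measurable P"
    unfolding G_def by (rule borel_measurable_tinner_logm_compose[OF hadamard tm s xP])
  have [measurable]: "f \<in> borel_measurable P"
    unfolding f_def tnorm_def using measurable_compose[OF s tmeasurable_fst[OF tm]] by measurable
  have [measurable]: "(\<lambda>\<omega>. (tnorm (yosida (A (s \<omega>)) (lam n) (x \<omega>)))\<^sup>2) \<in> borel_measurable P"
    unfolding tnorm_yosida x' by measurable
  have step: "(dist (x' \<omega>) xs)\<^sup>2 + (lam n)\<^sup>2 * (1 - 2 * \<beta>) * (tnorm (yosida (A (s \<omega>)) (lam n) (x \<omega>)))\<^sup>2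
      \<le> (dist (x \<omega>) xs)\<^sup>2 - 2 * lam n * G \<omega> + (lam n)\<^sup>2 / (2 * \<beta>) * f \<omega>"
    and dom: "\<bar>G \<omega>\<bar> \<le> f \<omega> + (dist (x \<omega>) xs)\<^sup>2" if "\<omega> \<in> space P" for \<omega>
    using selection_resolvent_step_ineq[OF hadamard A_tangent A_mono A_surj phis_sel
        measurable_space[OF s that] lam_pos[rule_format, of n] beta(1), where y="x \<omega>"]
    unfolding x' G_def f_def by auto
  have Ef: "AE \<omega> in P. nn_cond_exp P (filtr P \<mu> \<xi> n) (\<lambda>\<omega>. ennreal (f \<omega>)) \<omega>
      = ennreal (\<integral>s. (tnorm (\<phi>s s))\<^sup>2 \<partial>\<mu>)"
    using phis_sel unfolding f_def s_def selections_def
    by (intro nn_cond_exp_xi_integral[OF probO xi_meas xi_indep xi_distr[rule_format]]) auto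
  have "AE \<omega> in P. nn_cond_exp P (filtr P \<mu> \<xi> n) (\<lambda>\<omega>. ennreal ((dist (x' \<omega>) xs)\<^sup>2)) \<omega>
      + ennreal ((lam n)\<^sup>2 * (1 - 2 * \<beta>)) *
        nn_cond_exp P (filtr P \<mu> \<xi> n) (\<lambda>\<omega>. ennreal ((tnorm (yosida (A (s \<omega>)) (lam n) (x \<omega>)))\<^sup>2)) \<omega>
    \<le> ennreal ((dist (x \<omega>) xs)\<^sup>2 + (lam n)\<^sup>2 / (2 * \<beta>) * (\<integral>s. (tnorm (\<phi>s s))\<^sup>2 \<partial>\<mu>))"
    by (rule F.nn_cond_exp_le_drop_mean_zero[where G=G and L="2 * lam n",
          OF _ _ _ _ _ _ _ _ _ _ _ Ef _ A3[rule_format, of n, folded x_def s_def, folded G_def]];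
        (measurable)?)
      (use step dom beta lam_pos in \<open>auto simp: f_def\<close>)
  then show ?thesis unfolding x'_def x_def s_def by simp
qed

end
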